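(* Let $\mathbf{H}$ be the gap-insertion Hopf algebra of noncrossing partitions with convolution product $\star$ on $\mathbf H^*$, let $e$ be the infinitesimal character with $e(P)=1$ for one-block noncrossing partitions $P$ and $e(P)=0$ on other noncrossing partitions, and put $\psi_\star=\exp_\star(e)=\sum_{m\geq0}e^{\star m}/m!$. Let $\kappa$ be an infinitesimal character of $\mathbf{H}$ and $K$ the character of $\mathbf{B}$ with $K(P)=\kappa(P)$ for all nonempty noncrossing $P$. Then for every character $\phi$ of $\mathbf H$, $$\phi=\exp_\star(\kappa)\iff\phi=\psi_\star\curvearrowleft K.$$
   Context: Noncrossing partitions of $[n]$: no $a<c<b<d$ with $a,b$ in one block and $c,d$ in another; partitions of finite linearly ordered sets identified with partitions of $[n]$ via the order-preserving bijection; $P_{|X}$ induced partition. $\operatorname{Conv}(X)=\{\min X,\dots,\max X\}$; on blocks $\pi\to\rho$ iff $\operatorname{Conv}(\pi)\cap\rho\neq\emptyset$ (transitively closed). Upperset $U$: ($\pi\in U,\pi\to\rho$)$\Rightarrow\rho\in U$; lowerset $L$: ($\pi\in L,\sigma\to\pi$)$\Rightarrow\sigma\in L$. Cut $(L,U)$: lowerset $L$, complement $U$; $L$ identified with the restriction of $P$ to the union of its blocks, elements $x_1<\dots<x_k$; $D_0=\{y<x_1\}$, $D_i=\{x_i<y<x_{i+1}\}$, $D_k=\{y>x_k\}$, $U_i=P_{|D_i}$, $\overline U$ ordered product of nonempty $U_i$. $\mathbf H$: free associative unital algebra on nonempty noncrossing partitions, basis of multipartitions (shift-concatenated), cuts of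 multipartitions are tuples of cuts with $L=L_1\cdots L_r$, $\overline U=\overline{U_1}\cdots\overline{U_r}$. Coproduct $\Delta(P)=\sum_{\text{cuts}}L\otimes\overline U$, counit $\varepsilon$ ($1$ on $\mathbf1$, $0$ on nonempty monomials); $f\star g=(f\otimes g)\circ\Delta$. Characters: unital algebra maps to $\mathbb K$; infinitesimal characters: linear forms vanishing on $\mathbf1$ and on products of two nonempty monomials. $\mathbf B$: free commutative unital algebra on nonempty noncrossing partitions. For noncrossing $P\leq Q$ (refinement), $Q=\{\tau_1,\dots,\tau_l\}$, $P/Q=P_{|\tau_1}\cdots P_{|\tau_l}$. Coaction $\rho:\mathbf H\to\mathbf H\otimes\mathbf B$, algebra morphism with $\rho(P)=\sum_{Q\geq P\text{ noncrossing}}Q\otimes P/Q$; $\alpha\curvearrowleft\phi=(\alpha\otimes\phi)\circ\rho$. *)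

theory Defs
  imports Main "HOL-Library.Disjoint_Sets" "HOL-Library.Multiset"
begin

type_synonym ncpart = "nat set set"

definition noncrossing :: "ncpart \<Rightarrow> bool" where
  "noncrossing P \<longleftrightarrow>
     (\<forall>B1\<in>P. \<forall>B2\<in>P. B1 \<noteq> B2 \<longrightarrow>
        \<not> (\<exists>a b c d. a \<in> B1 \<and> b \<in> B1 \<and> c \<in> B2 \<and> d \<in> B2 \<and> a < c \<and> c < b \<and> b < d))"

definition ncp :: "nat \<Rightarrow> ncpart \<Rightarrow> bool" where
  "ncp n P \<longleftrightarrow> partition_on {1..n} P \<and> noncrossing P"

definition nonempty_ncp :: "ncpart \<Rightarrow> bool" where
  "nonempty_ncp P \<longleftrightarrow> (\<exists>n\<ge>1. ncp n P)"

text \<open>Basis monomials of H (multipartitions): words of nonempty noncrossing partitions.\<close>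
definition valid_word :: "ncpart list \<Rightarrow> bool" where
  "valid_word w \<longleftrightarrow> list_all nonempty_ncp w"

text \<open>Order-preserving identification of a finite set X of naturals with {1..card X}.\<close>
definition rank :: "nat set \<Rightarrow> nat \<Rightarrow> nat" where
  "rank X x = card {y\<in>X. y \<le> x}"

definition std :: "nat set \<Rightarrow> ncpart \<Rightarrow> ncpart" where
  "std X Q = (\<lambda>B. rank X ` B) ` Q"

definition restr :: "ncpart \<Rightarrow> nat set \<Rightarrow> ncpart" where
  "restr P X = {B \<inter> X | B. B \<in> P \<and> B \<inter> X \<noteq> {}}"

text \<open>Restriction followed by standardisation: P_{|X} as a partition of [card X].\<close>
definition induced :: "ncpart \<Rightarrow> nat set \<Rightarrow> ncpart" where
  "induced P X = std X (restr P X)"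

definition Conv :: "nat set \<Rightarrow> nat set" where
  "Conv X = {Min X..Max X}"

definition arrow :: "ncpart \<Rightarrow> nat set \<Rightarrow> nat set \<Rightarrow> bool" where
  "arrow P = tranclp (\<lambda>\<pi> \<rho>. \<pi> \<in> P \<and> \<rho> \<in> P \<and> Conv \<pi> \<inter> \<rho> \<noteq> {})"

definition lowerset :: "ncpart \<Rightarrow> ncpart \<Rightarrow> bool" where
  "lowerset P L \<longleftrightarrow> L \<subseteq> P \<and> (\<forall>\<pi>\<in>L. \<forall>\<sigma>. arrow P \<sigma> \<pi> \<longrightarrow> \<sigma> \<in> L)"

text \<open>Cuts (L,U) are determined by the lowerset L (U = P - L).\<close>
definition cuts :: "ncpart \<Rightarrow> ncpart set" where
  "cuts P = {L. lowerset P L}"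

text \<open>Left factor: the partition L (restriction of P to the union of its blocks),
  the empty partition being the unit (empty word).\<close>
definition lword :: "ncpart \<Rightarrow> ncpart \<Rightarrow> ncpart list" where
  "lword P L = (if L = {} then [] else [induced P (\<Union>L)])"

text \<open>Gap D_i, i = 0..k, where x_1 < ... < x_k are the elements of the union of L
  (list index shifted by one).\<close>
definition gap :: "ncpart \<Rightarrow> ncpart \<Rightarrow> nat \<Rightarrow> nat set" where
  "gap P L i = (let xs = sorted_list_of_set (\<Union>L); k = length xs in
     {y \<in> \<Union>P. y \<notin> \<Union>L \<and> (i = 0 \<or> xs ! (i - 1) < y) \<and> (i = k \<or> y < xs ! i)})"

text \<open>Right factor: ordered product of the nonempty U_i = P_{|D_i}.\<close>
definition uword :: "ncpart \<Rightarrow> ncpart \<Rightarrow> ncpart list" where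
  "uword P L = [induced P (gap P L i). i \<leftarrow> [0..<card (\<Union>L) + 1], gap P L i \<noteq> {}]"

text \<open>Convolution: (f * g)(w) = (f (x) g)(Delta w), Delta multiplicative,
  sum over tuples of cuts.\<close>
definition conv :: "(ncpart list \<Rightarrow> 'a::comm_ring_1) \<Rightarrow> (ncpart list \<Rightarrow> 'a) \<Rightarrow> ncpart list \<Rightarrow> 'a" where
  "conv f g w = (\<Sum>Ls \<in> listset (map cuts w).
      f (concat (map2 lword w Ls)) * g (concat (map2 uword w Ls)))"

definition counit :: "ncpart list \<Rightarrow> 'a::comm_ring_1" where
  "counit w = (if w = [] then 1 else 0)"

primrec conv_pow :: "(ncpart list \<Rightarrow> 'a::comm_ring_1) \<Rightarrow> nat \<Rightarrow> ncpart list \<Rightarrow> 'a" where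
  "conv_pow f 0 = counit"
| "conv_pow f (Suc m) = conv f (conv_pow f m)"

text \<open>exp_*(f) = sum_m f^{*m}/m!, evaluated pointwise as the sum of the (finitely many)
  nonzero terms.\<close>
definition exp_conv :: "(ncpart list \<Rightarrow> 'a::field_char_0) \<Rightarrow> ncpart list \<Rightarrow> 'a" where
  "exp_conv f w = (\<Sum>m \<in> {m. conv_pow f m w \<noteq> 0}. conv_pow f m w / fact m)"

definition is_character :: "(ncpart list \<Rightarrow> 'a::comm_ring_1) \<Rightarrow> bool" where
  "is_character \<phi> \<longleftrightarrow> \<phi> [] = 1 \<and> (\<forall>w. valid_word w \<longrightarrow> \<phi> w = (\<Prod>P\<leftarrow>w. \<phi> [P]))"

definition is_inf_character :: "(ncpart list \<Rightarrow> 'a::comm_ring_1) \<Rightarrow> bool" where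
  "is_inf_character \<kappa> \<longleftrightarrow> \<kappa> [] = 0 \<and>
     (\<forall>u v. valid_word u \<and> valid_word v \<and> u \<noteq> [] \<and> v \<noteq> [] \<longrightarrow> \<kappa> (u @ v) = 0)"

definition e_char :: "ncpart list \<Rightarrow> 'a::comm_ring_1" where
  "e_char w = (case w of [P] \<Rightarrow> (if card P = 1 then 1 else 0) | _ \<Rightarrow> 0)"

text \<open>Monomials of B: multisets of nonempty noncrossing partitions; a character of B
  is the multiplicative extension of its values on generators.\<close>
definition charB :: "(ncpart \<Rightarrow> 'a::comm_ring_1) \<Rightarrow> ncpart multiset \<Rightarrow> 'a" where
  "charB K M = (\<Prod>P \<in># M. K P)"

definition refines :: "ncpart \<Rightarrow> ncpart \<Rightarrow> bool" where
  "refines P Q \<longleftrightarrow> (\<forall>B\<in>P. \<exists>C\<in>Q. B \<subseteq> C)"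

definition coarsenings :: "ncpart \<Rightarrow> ncpart set" where
  "coarsenings P = {Q. partition_on (\<Union>P) Q \<and> noncrossing Q \<and> refines P Q}"

definition quot :: "ncpart \<Rightarrow> ncpart \<Rightarrow> ncpart multiset" where
  "quot P Q = image_mset (\<lambda>\<tau>. induced P \<tau>) (mset_set Q)"

text \<open>(alpha <- K)(w) = (alpha (x) K)(rho w), rho multiplicative on words.\<close>
definition act :: "(ncpart list \<Rightarrow> 'a::comm_ring_1) \<Rightarrow> (ncpart \<Rightarrow> 'a) \<Rightarrow> ncpart list \<Rightarrow> 'a" where
  "act \<alpha> K w = (\<Sum>Qs \<in> listset (map coarsenings w).
      \<alpha> Qs * charB K (sum_list (map2 quot w Qs)))"

end

theory Submission
  imports Defs
begin

text \<open>Both sides of the equivalence are linear forms, so it suffices to show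
  \<open>\<psi>\<^sub>\<star> \<curvearrowleft> K = exp\<^sub>\<star>(\<kappa>)\<close> on every basis word. The key identity is \<open>(e \<star> g) \<curvearrowleft> K = \<kappa> \<star> (g \<curvearrowleft> K)\<close> for every linear form \<open>g\<close>. As \<open>e\<close>
  only sees one-block partitions, the first letter \<open>P\<close> contributes to the left-hand side through
  pairs \<open>(Q, \<sigma>)\<close> of a noncrossing coarsening \<open>Q \<ge> P\<close> and an outer block \<open>\<sigma>\<close> of \<open>Q\<close>, and to the
  right-hand side through pairs \<open>(L, B)\<close> of a nonempty cut \<open>L\<close> of \<open>P\<close> and a tuple \<open>B\<close> of
  coarsenings of the gap partitions \<open>P\<^bsub>|D\<^sub>i\<^esub>\<close>. These pairs correspond bijectively through
  \<open>\<sigma> = \<Union>L\<close> and \<open>Q = {\<sigma>} \<union> B\<close>, and the weights match because \<open>K(P\<^bsub>|\<sigma>\<^esub>) = \<kappa>(L)\<close>.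
  Iterating gives \<open>e\<^sup>\<star>\<^sup>m \<curvearrowleft> K = \<kappa>\<^sup>\<star>\<^sup>m\<close>. The \<open>m\<close>-th convolution power of an infinitesimal
  character vanishes on words with fewer than \<open>m\<close> points, so on each word both exponential series
  are finite sums and can be compared term by term.\<close>

section \<open>Ranks and standardisation\<close>

lemma rank_less:
  assumes "finite X" "x \<in> X" "y \<in> X" "x < y"
  shows "rank X x < rank X y"
proof -
  have "y \<in> {z\<in>X. z \<le> y}" "y \<notin> {z\<in>X. z \<le> x}" "{z\<in>X. z \<le> x} \<subseteq> {z\<in>X. z \<le> y}"
    using assms by auto
  then have "{z\<in>X. z \<le> x} \<subset> {z\<in>X. z \<le> y}" by blast
  then show ?thesis unfolding rank_def using assms(1) by (intro psubset_card_mono) auto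
qed

lemma rank_less_iff:
  assumes "finite X" "x \<in> X" "y \<in> X"
  shows "rank X x < rank X y \<longleftrightarrow> x < y"
  using rank_less[OF assms] rank_less[OF assms(1,3,2)] by (metis less_asym linorder_neqE_nat)

lemma rank_le_iff:
  assumes "finite X" "x \<in> X" "y \<in> X"
  shows "rank X x \<le> rank X y \<longleftrightarrow> x \<le> y"
  using rank_less_iff[OF assms(1,3,2)] by (simp add: not_less[symmetric])

lemma inj_on_rank: "finite X \<Longrightarrow> inj_on (rank X) X"
  by (rule inj_onI) (metis rank_le_iff order_antisym order_refl)

lemma rank_image: "finite X \<Longrightarrow> rank X ` X = {1..card X}"
proof -
  assume fin: "finite X"
  have "1 \<le> rank X x" if "x \<in> X" for x
    unfolding rank_def using fin that by (auto simp: Suc_le_eq card_gt_0_iff)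
  moreover have "rank X x \<le> card X" for x
    unfolding rank_def using fin by (intro card_mono) auto
  ultimately have "rank X ` X \<subseteq> {1..card X}" by auto
  moreover have "card (rank X ` X) = card {1..card X}"
    using card_image[OF inj_on_rank[OF fin]] by simp
  ultimately show ?thesis by (intro card_subset_eq) auto
qed

lemma bij_betw_rank: "finite X \<Longrightarrow> bij_betw (rank X) X {1..card X}"
  by (simp add: bij_betw_def inj_on_rank rank_image)

lemma rank_atLeastAtMost:
  assumes "x \<in> {1..n}"
  shows "rank {1..n} x = x"
proof -
  have "{y \<in> {1..n}. y \<le> x} = {1..x}" using assms by auto
  then show ?thesis unfolding rank_def by simp
qed

lemma rank_rank:
  assumes "finite D" "\<tau> \<subseteq> D" "x \<in> \<tau>"
  shows "rank (rank D ` \<tau>) (rank D x) = rank \<tau> x"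
proof -
  have "{y \<in> rank D ` \<tau>. y \<le> rank D x} = rank D ` {z \<in> \<tau>. z \<le> x}"
    using rank_le_iff[OF assms(1)] assms(2,3) by auto
  moreover have "inj_on (rank D) {z \<in> \<tau>. z \<le> x}"
    by (rule inj_on_subset[OF inj_on_rank[OF assms(1)]]) (use assms(2) in blast)
  ultimately show ?thesis unfolding rank_def by (simp add: card_image)
qed

definition unstd :: "nat set \<Rightarrow> ncpart \<Rightarrow> ncpart" where
  "unstd D R = (\<lambda>b. inv_into D (rank D) ` b) ` R"

lemma inv_into_rank:
  assumes "finite D" "a \<in> {1..card D}"
  shows "inv_into D (rank D) a \<in> D" "rank D (inv_into D (rank D) a) = a"
  using assms rank_image[OF assms(1)] by (auto intro: inv_into_into f_inv_into_f)

lemma inv_into_rank_less: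
  assumes "finite D" "a \<in> {1..card D}" "b \<in> {1..card D}" "a < b"
  shows "inv_into D (rank D) a < inv_into D (rank D) b"
  using assms rank_less_iff[OF assms(1) inv_into_rank(1)[OF assms(1,2)] inv_into_rank(1)[OF assms(1,3)]]
  by (simp add: inv_into_rank(2))

section \<open>Noncrossing and induced partitions\<close>

lemma noncrossingD:
  assumes "noncrossing P" "B1 \<in> P" "B2 \<in> P" "B1 \<noteq> B2"
    "a \<in> B1" "b \<in> B1" "c \<in> B2" "d \<in> B2" "a < c" "c < b" "b < d"
  shows False
proof -
  have "\<not> (\<exists>a b c d. a \<in> B1 \<and> b \<in> B1 \<and> c \<in> B2 \<and> d \<in> B2 \<and> a < c \<and> c < b \<and> b < d)"
    using assms(1)[unfolded noncrossing_def, rule_format, OF assms(2-4)] .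
  with assms(5-) show False by blast
qed

lemma noncrossingI:
  assumes "\<And>B1 B2 a b c d. B1 \<in> P \<Longrightarrow> B2 \<in> P \<Longrightarrow> B1 \<noteq> B2 \<Longrightarrow>
      a \<in> B1 \<Longrightarrow> b \<in> B1 \<Longrightarrow> c \<in> B2 \<Longrightarrow> d \<in> B2 \<Longrightarrow> a < c \<Longrightarrow> c < b \<Longrightarrow> b < d \<Longrightarrow> False"
  shows "noncrossing P"
  unfolding noncrossing_def using assms by blast

lemma noncrossing_image:
  assumes "noncrossing R" and mono: "\<And>x y. x \<in> \<Union>R \<Longrightarrow> y \<in> \<Union>R \<Longrightarrow> x < y \<Longrightarrow> f x < f y"
  shows "noncrossing ((`) f ` R)"
proof (rule noncrossingI)
  have less_iff: "f u < f v \<longleftrightarrow> u < v" if "u \<in> \<Union>R" "v \<in> \<Union>R" for u v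
    using mono[OF that] mono[OF that(2,1)] by (metis less_asym linorder_neqE_nat)
  fix B1 B2 a b c d
  assume "B1 \<in> (`) f ` R" "B2 \<in> (`) f ` R" "B1 \<noteq> B2"
    and x: "a \<in> B1" "b \<in> B1" "c \<in> B2" "d \<in> B2" "a < c" "c < b" "b < d"
  then obtain C1 C2 where C: "C1 \<in> R" "C2 \<in> R" "C1 \<noteq> C2" "B1 = f ` C1" "B2 = f ` C2" by blast
  then obtain a' b' c' d' where y: "a' \<in> C1" "b' \<in> C1" "c' \<in> C2" "d' \<in> C2"
    "a = f a'" "b = f b'" "c = f c'" "d = f d'"
    using x by blast
  have "a' \<in> \<Union>R" "b' \<in> \<Union>R" "c' \<in> \<Union>R" "d' \<in> \<Union>R" using y C by auto
  then have "a' < c'" "c' < b'" "b' < d'" using x(5-7) less_iff unfolding y(5-8) by auto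
  then show False by (rule noncrossingD[OF assms(1) C(1-3) y(1-4)])
qed

lemma restr_eq: "restr P X = (\<inter>) X ` P - {{}}"
  unfolding restr_def by auto

lemma partition_on_restr: "partition_on A P \<Longrightarrow> X \<subseteq> A \<Longrightarrow> partition_on X (restr P X)"
proof -
  assume "partition_on A P" "X \<subseteq> A"
  moreover have "A \<inter> X = X" using \<open>X \<subseteq> A\<close> by blast
  ultimately show ?thesis using partition_on_restrict[of A P X] by (simp add: restr_eq Int_commute)
qed

lemma noncrossing_restr:
  assumes "noncrossing P"
  shows "noncrossing (restr P X)"
proof (rule noncrossingI)
  fix B1 B2 a b c d
  assume B: "B1 \<in> restr P X" "B2 \<in> restr P X" "B1 \<noteq> B2"
    and x: "a \<in> B1" "b \<in> B1" "c \<in> B2" "d \<in> B2" "a < c" "c < b" "b < d"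
  obtain C1 C2 where C: "C1 \<in> P" "C2 \<in> P" "B1 = C1 \<inter> X" "B2 = C2 \<inter> X"
    using B(1,2) unfolding restr_def by blast
  then have "C1 \<noteq> C2" using B(3) by blast
  with x C show False by (intro noncrossingD[OF assms(1) C(1,2)]) blast+
qed

lemma ncp_std:
  assumes "partition_on X R" "noncrossing R" "finite X"
  shows "ncp (card X) (std X R)"
proof -
  have "partition_on (rank X ` X) ((`) (rank X) ` R - {{}})"
    using partition_on_inj_image[OF assms(1) inj_on_rank[OF assms(3)]] .
  moreover have "(`) (rank X) ` R - {{}} = std X R"
    using assms(1) unfolding std_def partition_on_def by auto
  ultimately have "partition_on {1..card X} (std X R)" using rank_image[OF assms(3)] by simp
  moreover have "noncrossing (std X R)" unfolding std_def
    using assms by (intro noncrossing_image) (auto simp: partition_on_def intro: rank_less)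
  ultimately show ?thesis unfolding ncp_def by simp
qed

lemma ncp_induced:
  assumes "partition_on A P" "noncrossing P" "X \<subseteq> A" "finite X"
  shows "ncp (card X) (induced P X)"
  unfolding induced_def
  using assms partition_on_restr noncrossing_restr by (intro ncp_std) blast+

lemma ncpD: "ncp n P \<Longrightarrow> partition_on {1..n} P" "ncp n P \<Longrightarrow> noncrossing P"
  unfolding ncp_def by auto

lemma ncp_Union: "ncp n P \<Longrightarrow> \<Union>P = {1..n}"
  unfolding ncp_def partition_on_def by auto

lemma nonempty_ncpE:
  assumes "nonempty_ncp P"
  obtains n where "n \<ge> 1" "ncp n P"
  using assms unfolding nonempty_ncp_def by blast

lemma nonempty_ncpD:
  assumes "nonempty_ncp P"
  shows "partition_on (\<Union>P) P" "noncrossing P" "finite (\<Union>P)" "\<Union>P \<noteq> {}"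
proof -
  obtain n where n: "n \<ge> 1" "ncp n P" using assms by (rule nonempty_ncpE)
  then show "partition_on (\<Union>P) P" "noncrossing P" "finite (\<Union>P)" "\<Union>P \<noteq> {}"
    using ncpD[OF n(2)] ncp_Union[OF n(2)] by auto
qed

lemma finite_nonempty_ncp: "nonempty_ncp P \<Longrightarrow> finite P"
  using nonempty_ncpD(1,3) finite_elements by blast

lemma empty_notin_nonempty_ncp: "nonempty_ncp P \<Longrightarrow> {} \<notin> P"
  using nonempty_ncpD(1) partition_onD3 by blast

lemma finite_block_nonempty_ncp: "nonempty_ncp P \<Longrightarrow> X \<subseteq> \<Union>P \<Longrightarrow> finite X"
  using nonempty_ncpD(3) finite_subset by blast

lemma ncp_induced_nonempty_ncp:
  assumes "nonempty_ncp P" "X \<subseteq> \<Union>P"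
  shows "ncp (card X) (induced P X)"
  using assms nonempty_ncpD[OF assms(1)] finite_block_nonempty_ncp by (intro ncp_induced) blast+

lemma nonempty_ncp_induced:
  assumes "nonempty_ncp P" "X \<subseteq> \<Union>P" "X \<noteq> {}"
  shows "nonempty_ncp (induced P X)"
proof -
  have "card X \<ge> 1"
    using finite_block_nonempty_ncp[OF assms(1,2)] assms(3) by (simp add: Suc_le_eq card_gt_0_iff)
  then show ?thesis using ncp_induced_nonempty_ncp[OF assms(1,2)] unfolding nonempty_ncp_def by blast
qed

lemma card_Union_induced:
  assumes "nonempty_ncp P" "X \<subseteq> \<Union>P"
  shows "card (\<Union>(induced P X)) = card X"
  using ncp_Union[OF ncp_induced_nonempty_ncp[OF assms]] by simp

lemma induced_self:
  assumes "ncp n P" shows "induced P (\<Union>P) = P"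
proof -
  have "{} \<notin> P" using ncpD(1)[OF assms] unfolding partition_on_def by blast
  moreover have "(\<inter>) (\<Union>P) ` P = id ` P" by (rule image_cong) auto
  ultimately have "restr P (\<Union>P) = P" unfolding restr_eq by simp
  moreover have "rank {1..n} ` B = B" if "B \<in> P" for B
  proof -
    have "B \<subseteq> {1..n}" using that ncp_Union[OF assms] by blast
    then have "rank {1..n} ` B = (\<lambda>x. x) ` B" using rank_atLeastAtMost by (intro image_cong) auto
    then show ?thesis by simp
  qed
  ultimately show ?thesis unfolding induced_def std_def ncp_Union[OF assms] by simp
qed

lemma partition_on_unstd:
  assumes "finite D" "partition_on {1..card D} R"
  shows "partition_on D (unstd D R)"
proof -
  have inj: "inj_on (inv_into D (rank D)) {1..card D}"
    by (rule inj_on_inv_into) (simp add: rank_image[OF assms(1)])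
  have "inv_into D (rank D) ` {1..card D} = D"
    using bij_betw_inv_into[OF bij_betw_rank[OF assms(1)]] by (simp add: bij_betw_def)
  moreover have "(`) (inv_into D (rank D)) ` R - {{}} = unstd D R"
    using assms(2) unfolding unstd_def partition_on_def by auto
  ultimately show ?thesis using partition_on_inj_image[OF assms(2) inj] by simp
qed

lemma noncrossing_unstd:
  assumes "finite D" "partition_on {1..card D} R" "noncrossing R"
  shows "noncrossing (unstd D R)"
  unfolding unstd_def using assms inv_into_rank_less[OF assms(1)]
  by (intro noncrossing_image) (auto simp: partition_on_def)

lemma std_unstd:
  assumes "finite D" "\<Union>R \<subseteq> {1..card D}"
  shows "std D (unstd D R) = R"
proof -
  have "rank D ` inv_into D (rank D) ` b = b" if "b \<in> R" for b
  proof -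
    have "b \<subseteq> {1..card D}" using that assms(2) by blast
    then have "(\<lambda>x. rank D (inv_into D (rank D) x)) ` b = (\<lambda>x. x) ` b"
      using inv_into_rank(2)[OF assms(1)] by (intro image_cong) auto
    then show ?thesis by (simp add: image_image)
  qed
  then show ?thesis unfolding std_def unstd_def image_image by simp
qed

lemma unstd_std:
  assumes "finite D" "\<Union>R \<subseteq> D"
  shows "unstd D (std D R) = R"
proof -
  have "inv_into D (rank D) ` rank D ` b = b" if "b \<in> R" for b
    using that assms inv_into_image_cancel[OF inj_on_rank[OF assms(1)]] by blast
  then show ?thesis unfolding std_def unstd_def image_image by simp
qed

lemma in_induced_iff: "S \<in> induced P X \<longleftrightarrow> (\<exists>\<pi>\<in>P. \<pi> \<inter> X \<noteq> {} \<and> S = rank X ` (\<pi> \<inter> X))"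
  unfolding induced_def std_def restr_def by auto

lemma refinesE:
  assumes "refines P Q" "\<pi> \<in> P"
  obtains C where "C \<in> Q" "\<pi> \<subseteq> C"
  using assms unfolding refines_def by blast

lemma refines_induced:
  assumes "refines P Q"
  shows "refines (induced P X) (induced Q X)"
  unfolding refines_def
proof
  fix B assume "B \<in> induced P X"
  then obtain \<pi> where \<pi>: "\<pi> \<in> P" "\<pi> \<inter> X \<noteq> {}" "B = rank X ` (\<pi> \<inter> X)"
    unfolding in_induced_iff by blast
  obtain C where C: "C \<in> Q" "\<pi> \<subseteq> C" using assms \<pi>(1) by (rule refinesE)
  then have "rank X ` (C \<inter> X) \<in> induced Q X"
    using \<pi>(2) unfolding in_induced_iff by blast
  moreover have "B \<subseteq> rank X ` (C \<inter> X)" using \<pi>(3) C(2) by blast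
  ultimately show "\<exists>C\<in>induced Q X. B \<subseteq> C" by blast
qed

lemma induced_in_coarsenings:
  assumes "partition_on A P" "noncrossing P" "partition_on A Q" "noncrossing Q" "refines P Q"
    "X \<subseteq> A" "finite X"
  shows "induced Q X \<in> coarsenings (induced P X)"
  using ncp_Union[OF ncp_induced[OF assms(1,2,6,7)]] ncpD[OF ncp_induced[OF assms(3,4,6,7)]]
    refines_induced[OF assms(5)]
  unfolding coarsenings_def by simp

lemma restr_induced_rank_image:
  assumes "finite D" "\<tau> \<subseteq> D"
  shows "restr (induced P D) (rank D ` \<tau>) = (`) (rank D) ` restr P \<tau>"
proof (rule set_eqI)
  have image_Int: "rank D ` (\<pi> \<inter> D) \<inter> rank D ` \<tau> = rank D ` (\<pi> \<inter> \<tau>)" for \<pi>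
    using inj_on_image_Int[OF inj_on_rank[OF assms(1)], of "\<pi> \<inter> D" \<tau>] assms(2)
    by (simp add: Int_assoc Int_absorb1)
  fix X
  have "X \<in> restr (induced P D) (rank D ` \<tau>) \<longleftrightarrow>
      (\<exists>\<pi>\<in>P. \<pi> \<inter> D \<noteq> {} \<and> X = rank D ` (\<pi> \<inter> D) \<inter> rank D ` \<tau> \<and> X \<noteq> {})"
    unfolding restr_def in_induced_iff by blast
  also have "\<dots> \<longleftrightarrow> (\<exists>\<pi>\<in>P. \<pi> \<inter> \<tau> \<noteq> {} \<and> X = rank D ` (\<pi> \<inter> \<tau>))"
    unfolding image_Int using assms(2) by blast
  also have "\<dots> \<longleftrightarrow> X \<in> (`) (rank D) ` restr P \<tau>"
    unfolding restr_def by blast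
  finally show "X \<in> restr (induced P D) (rank D ` \<tau>) \<longleftrightarrow> X \<in> (`) (rank D) ` restr P \<tau>" .
qed

lemma induced_induced:
  assumes "finite D" "\<tau> \<subseteq> D"
  shows "induced (induced P D) (rank D ` \<tau>) = induced P \<tau>"
proof -
  have "rank (rank D ` \<tau>) ` rank D ` B = rank \<tau> ` B" if "B \<in> restr P \<tau>" for B
  proof -
    have "B \<subseteq> \<tau>" using that unfolding restr_def by blast
    then show ?thesis unfolding image_image using rank_rank[OF assms] by (intro image_cong) auto
  qed
  then show ?thesis
    unfolding induced_def[of "induced P D"] restr_induced_rank_image[OF assms] std_def image_image
    by (simp add: induced_def std_def)
qed

section \<open>Convolution and the coaction on words\<close>

lemma listset_iff_list_all2: "xs \<in> listset As \<longleftrightarrow> list_all2 (\<in>) xs As"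
  by (induction As arbitrary: xs) (auto simp: set_Cons_def list_all2_Cons2)

lemma set_Cons_eq_image: "set_Cons A B = (\<lambda>(x, xs). x # xs) ` (A \<times> B)"
  by (auto simp: set_Cons_def)

lemma sum_set_Cons: "(\<Sum>xs\<in>set_Cons A B. F xs) = (\<Sum>x\<in>A. \<Sum>xs\<in>B. F (x # xs))"
proof -
  have "inj_on (\<lambda>(x, xs). x # xs) (A \<times> B)" by (auto simp: inj_on_def)
  then show ?thesis by (simp add: set_Cons_eq_image sum.reindex sum.cartesian_product split_def)
qed

lemma UN_lessThan_length_nth: "(\<Union>i<length xs. f (xs ! i)) = (\<Union>x\<in>set xs. f x)"
proof -
  have "set xs = (!) xs ` {..<length xs}" by (auto simp: in_set_conv_nth)
  then show ?thesis by (simp add: image_image)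
qed

lemma conv_Nil: "conv f g [] = f [] * g []"
  by (simp add: conv_def)

lemma conv_Cons:
  "conv f g (P # w) = (\<Sum>L\<in>cuts P. conv (\<lambda>v. f (lword P L @ v)) (\<lambda>v. g (uword P L @ v)) w)"
  unfolding conv_def by (simp add: sum_set_Cons)

lemma conv_cong:
  assumes "\<And>Ls. Ls \<in> listset (map cuts w) \<Longrightarrow> f1 (concat (map2 lword w Ls)) = f2 (concat (map2 lword w Ls))"
    and "\<And>Ls. Ls \<in> listset (map cuts w) \<Longrightarrow> g1 (concat (map2 uword w Ls)) = g2 (concat (map2 uword w Ls))"
  shows "conv f1 g1 w = conv f2 g2 w"
  unfolding conv_def using assms by (intro sum.cong) auto

lemma conv_add_left: "conv (\<lambda>v. a v + b v) g w = conv a g w + conv b g w"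
  unfolding conv_def by (simp add: distrib_right sum.distrib)

lemma conv_scale_left: "conv (\<lambda>v. c * a v) g w = c * conv a g w"
  unfolding conv_def by (simp add: sum_distrib_left mult_ac)

lemma conv_zero_left: "conv (\<lambda>v. 0) g w = 0"
  unfolding conv_def by simp

lemma conv_sum_right: "conv f (\<lambda>v. \<Sum>i\<in>I. a i v) w = (\<Sum>i\<in>I. conv f (a i) w)"
  unfolding conv_def by (simp add: sum_distrib_left sum.swap[of _ I])

lemma conv_scale_right: "conv f (\<lambda>v. c * a v) w = c * conv f a w"
  unfolding conv_def by (simp add: sum_distrib_left mult_ac)

lemma charB_add: "charB K (M + N) = charB K M * charB K N"
  by (simp add: charB_def)

lemma charB_quot: "charB K (quot P Q) = (\<Prod>\<tau>\<in>Q. K (induced P \<tau>))"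
  by (simp add: charB_def quot_def prod_unfold_prod_mset multiset.map_comp comp_def)

lemma charB_sum_list_map2_quot:
  "charB K (sum_list (map2 quot (map f xs) (map g xs))) = (\<Prod>x\<leftarrow>xs. charB K (quot (f x) (g x)))"
  by (induction xs) (simp_all add: charB_add, simp add: charB_def)

lemma act_Nil: "act \<alpha> K [] = \<alpha> []"
  by (simp add: act_def charB_def)

lemma act_Cons:
  "act \<alpha> K (P # w) = (\<Sum>Q\<in>coarsenings P. charB K (quot P Q) * act (\<lambda>v. \<alpha> (Q # v)) K w)"
  unfolding act_def by (simp add: sum_set_Cons charB_add sum_distrib_left mult_ac)

lemma act_append: "act \<alpha> K (u @ v) = act (\<lambda>x. act (\<lambda>y. \<alpha> (x @ y)) K v) K u"
  by (induction u arbitrary: \<alpha>) (simp_all add: act_Nil act_Cons)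

lemma act_cong:
  "(\<And>Qs. Qs \<in> listset (map coarsenings w) \<Longrightarrow> \<alpha>1 Qs = \<alpha>2 Qs) \<Longrightarrow> act \<alpha>1 K w = act \<alpha>2 K w"
  unfolding act_def by (intro sum.cong) auto

lemma act_add: "act (\<lambda>v. a v + b v) K w = act a K w + act b K w"
  unfolding act_def by (simp add: distrib_right sum.distrib)

lemma act_sum: "act (\<lambda>v. \<Sum>i\<in>I. a i v) K w = (\<Sum>i\<in>I. act (a i) K w)"
  unfolding act_def by (simp add: sum_distrib_right sum.swap[of _ I])

lemma act_scale: "act (\<lambda>v. c * a v) K w = c * act a K w"
  unfolding act_def by (simp add: sum_distrib_left mult_ac)

lemma act_divide: "act (\<lambda>v. a v / c) K w = act a K w / (c :: 'a :: field)"
  unfolding act_def by (simp add: sum_divide_distrib)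

lemma act_zero: "act (\<lambda>v. 0) K w = 0"
  by (simp add: act_def)

lemma act_counit: "act counit K w = counit w"
  by (cases w) (simp_all add: act_Nil act_Cons counit_def act_zero)

section \<open>Cuts and coarsenings\<close>

lemma empty_in_cuts: "{} \<in> cuts P"
  by (simp add: cuts_def lowerset_def)

lemma cuts_subset: "L \<in> cuts P \<Longrightarrow> L \<subseteq> P"
  by (simp add: cuts_def lowerset_def)

lemma finite_cuts: "finite P \<Longrightarrow> finite (cuts P)"
  by (rule finite_subset[of _ "Pow P"]) (auto simp: cuts_def lowerset_def)

lemma in_cutsD:
  assumes "L \<in> cuts P" "\<pi> \<in> L" "arrow P \<sigma> \<pi>"
  shows "\<sigma> \<in> L"
  using assms unfolding cuts_def lowerset_def by blast

lemma Union_cut_nonempty: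
  assumes "nonempty_ncp P" "L \<in> cuts P" "L \<noteq> {}"
  shows "\<Union>L \<noteq> {}"
  using assms cuts_subset empty_notin_nonempty_ncp by fastforce

lemma lword_empty [simp]: "lword P {} = []"
  by (simp add: lword_def)

lemma lword_nonempty: "L \<noteq> {} \<Longrightarrow> lword P L = [induced P (\<Union>L)]"
  by (simp add: lword_def)

lemma uword_empty:
  assumes "nonempty_ncp P" shows "uword P {} = [P]"
proof -
  obtain n where "ncp n P" using assms by (rule nonempty_ncpE)
  moreover have "gap P {} 0 = \<Union>P" by (auto simp: gap_def Let_def)
  ultimately show ?thesis using nonempty_ncpD(4)[OF assms] induced_self by (simp add: uword_def)
qed

lemma valid_word_simps [simp]:
  "valid_word []" "valid_word (P # w) \<longleftrightarrow> nonempty_ncp P \<and> valid_word w"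
  "valid_word (u @ v) \<longleftrightarrow> valid_word u \<and> valid_word v"
  by (auto simp: valid_word_def)

lemma valid_word_lword:
  assumes "nonempty_ncp P" "L \<in> cuts P" shows "valid_word (lword P L)"
proof (cases "L = {}")
  case False
  have "\<Union>L \<subseteq> \<Union>P" using cuts_subset[OF assms(2)] by blast
  then show ?thesis
    using nonempty_ncp_induced[OF assms(1)] Union_cut_nonempty[OF assms False] False
    by (simp add: lword_nonempty)
qed simp

lemma valid_word_uword:
  assumes "nonempty_ncp P" shows "valid_word (uword P L)"
proof -
  have "gap P L i \<subseteq> \<Union>P" for i by (auto simp: gap_def Let_def)
  then have "nonempty_ncp (induced P (gap P L i))" if "gap P L i \<noteq> {}" for i
    using nonempty_ncp_induced[OF assms _ that] by blast
  then show ?thesis by (auto simp: uword_def valid_word_def list_all_iff)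
qed

lemma valid_word_lwords:
  "valid_word w \<Longrightarrow> Ls \<in> listset (map cuts w) \<Longrightarrow> valid_word (concat (map2 lword w Ls))"
  by (induction w arbitrary: Ls) (auto simp: set_Cons_def valid_word_lword)

lemma valid_word_uwords:
  "valid_word w \<Longrightarrow> Ls \<in> listset (map cuts w) \<Longrightarrow> valid_word (concat (map2 uword w Ls))"
  by (induction w arbitrary: Ls) (auto simp: set_Cons_def valid_word_uword)

lemma coarseningsD:
  assumes "Q \<in> coarsenings P"
  shows "partition_on (\<Union>P) Q" "noncrossing Q" "refines P Q"
  using assms unfolding coarsenings_def by blast+

lemma coarsenings_nonempty_ncp:
  assumes "nonempty_ncp P" "Q \<in> coarsenings P" shows "nonempty_ncp Q"
proof -
  obtain n where "n \<ge> 1" "ncp n P" using assms(1) by (rule nonempty_ncpE)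
  then show ?thesis
    using assms(2) ncp_Union unfolding coarsenings_def nonempty_ncp_def ncp_def by auto
qed

lemma finite_coarsenings:
  assumes "nonempty_ncp P" shows "finite (coarsenings P)"
proof -
  have "finite {Q. partition_on (\<Union>P) Q}"
    using nonempty_ncpD(3)[OF assms] by (rule finitely_many_partition_on)
  then show ?thesis unfolding coarsenings_def by (rule finite_subset[rotated]) auto
qed

lemma valid_word_listset_coarsenings:
  "valid_word w \<Longrightarrow> Qs \<in> listset (map coarsenings w) \<Longrightarrow> valid_word Qs"
  by (induction w arbitrary: Qs) (auto simp: set_Cons_def coarsenings_nonempty_ncp)

lemma counit_simps [simp]: "counit [] = 1" "counit (x # xs) = 0"
  by (simp_all add: counit_def)

lemma sum_cuts_only_empty:
  assumes "nonempty_ncp P" "\<And>L. L \<in> cuts P \<Longrightarrow> L \<noteq> {} \<Longrightarrow> F L = 0"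
  shows "(\<Sum>L\<in>cuts P. F L) = F {}"
  using assms finite_cuts[OF finite_nonempty_ncp[OF assms(1)]] empty_in_cuts
  by (subst sum.remove) (auto intro: sum.neutral)

lemma conv_counit_left: "valid_word w \<Longrightarrow> conv counit h w = h w"
proof (induction w arbitrary: h)
  case (Cons P w)
  then have P: "nonempty_ncp P" and w: "valid_word w" by auto
  have "conv counit h (P # w) = conv (\<lambda>v. counit (lword P {} @ v)) (\<lambda>v. h (uword P {} @ v)) w"
    unfolding conv_Cons using P
    by (rule sum_cuts_only_empty) (simp add: lword_nonempty conv_zero_left)
  then show ?case using Cons.IH[OF w] by (simp add: uword_empty[OF P])
qed (simp add: conv_Nil)

lemma inf_character_append:
  assumes "is_inf_character f" "valid_word x" "valid_word v"
  shows "f (x @ v) = f x * counit v + counit x * f v"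
  using assms unfolding is_inf_character_def counit_def by (cases "x = []"; cases "v = []") auto

text \<open>As \<open>f\<close> kills products of two nonempty words, the left factor of a surviving term comes
  from a single letter: either from a nonempty cut of \<open>P\<close>, and then all of \<open>w\<close> goes to the
  right, or from \<open>w\<close>, and then all of \<open>P\<close> goes to the right.\<close>

lemma conv_Cons_inf_character:
  assumes f: "is_inf_character f" and P: "nonempty_ncp P" and w: "valid_word w"
  shows "conv f g (P # w) = (\<Sum>L\<in>cuts P. f (lword P L) * g (uword P L @ w)) + conv f (\<lambda>v. g (P # v)) w"
proof -
  have "conv (\<lambda>v. f (lword P L @ v)) (\<lambda>v. g (uword P L @ v)) w
      = f (lword P L) * g (uword P L @ w) + counit (lword P L) * conv f (\<lambda>v. g (uword P L @ v)) w"
    if "L \<in> cuts P" for L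
  proof -
    have "conv (\<lambda>v. f (lword P L @ v)) (\<lambda>v. g (uword P L @ v)) w
       = conv (\<lambda>v. f (lword P L) * counit v + counit (lword P L) * f v) (\<lambda>v. g (uword P L @ v)) w"
      using that
      by (intro conv_cong refl inf_character_append[OF f] valid_word_lword[OF P] valid_word_lwords[OF w])
    then show ?thesis by (simp add: conv_add_left conv_scale_left conv_counit_left[OF w])
  qed
  then have "conv f g (P # w) = (\<Sum>L\<in>cuts P. f (lword P L) * g (uword P L @ w))
      + (\<Sum>L\<in>cuts P. counit (lword P L) * conv f (\<lambda>v. g (uword P L @ v)) w)"
    unfolding conv_Cons by (simp add: sum.distrib)
  also have "(\<Sum>L\<in>cuts P. counit (lword P L) * conv f (\<lambda>v. g (uword P L @ v)) w) = conv f (\<lambda>v. g (P # v)) w"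
    using P by (subst sum_cuts_only_empty) (auto simp: lword_nonempty uword_empty[OF P])
  finally show ?thesis .
qed

section \<open>Gaps of a cut\<close>

definition gap_index :: "nat set \<Rightarrow> nat \<Rightarrow> nat" where
  "gap_index U y = card {x\<in>U. x < y}"

text \<open>For \<open>U = \<Union>L\<close>, \<^term>\<open>gap_block P U c\<close> is the gap \<open>D\<^sub>c\<close> of the cut \<open>L\<close>
  (\<open>gap_eq_gap_block\<close>), described without enumerating \<open>U\<close>.\<close>

definition gap_block :: "ncpart \<Rightarrow> nat set \<Rightarrow> nat \<Rightarrow> nat set" where
  "gap_block P U c = {y\<in>\<Union>P. y \<notin> U \<and> gap_index U y = c}"

definition gap_indices :: "ncpart \<Rightarrow> nat set \<Rightarrow> nat list" where
  "gap_indices P U = filter (\<lambda>c. gap_block P U c \<noteq> {}) [0..<card U + 1]"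

lemma gap_index_le_card: "finite U \<Longrightarrow> gap_index U y \<le> card U"
  unfolding gap_index_def by (intro card_mono) auto

lemma gap_index_mono: "finite U \<Longrightarrow> y \<le> y' \<Longrightarrow> gap_index U y \<le> gap_index U y'"
  unfolding gap_index_def by (intro card_mono) auto

lemma gap_index_strict_mono:
  assumes "finite U" "x \<in> U" "x < y"
  shows "gap_index U x < gap_index U y"
proof -
  have "{z\<in>U. z < x} \<subset> {z\<in>U. z < y}" using assms by auto
  then show ?thesis unfolding gap_index_def using assms(1) by (intro psubset_card_mono) auto
qed

lemma gap_index_nth_sorted_list_of_set:
  assumes "finite U" "j < card U"
  shows "gap_index U (sorted_list_of_set U ! j) = j"
proof -
  define xs where "xs = sorted_list_of_set U"
  have xs: "sorted_wrt (<) xs" "distinct xs" "set xs = U" "length xs = card U"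
    using assms(1) unfolding xs_def by auto
  have less_iff: "xs ! i < xs ! j \<longleftrightarrow> i < j" if "i < length xs" for i
  proof (cases i j rule: linorder_cases)
    case less
    then show ?thesis using sorted_wrt_nth_less[OF xs(1) less] assms(2) xs(4) by simp
  next
    case greater
    then show ?thesis using sorted_wrt_nth_less[OF xs(1) greater that] by simp
  qed simp
  have "{x\<in>U. x < xs ! j} = (!) xs ` {..<j}"
  proof
    show "(!) xs ` {..<j} \<subseteq> {x\<in>U. x < xs ! j}"
      using less_iff assms(2) xs(3,4) by (auto intro: nth_mem)
    show "{x\<in>U. x < xs ! j} \<subseteq> (!) xs ` {..<j}"
    proof
      fix x assume x: "x \<in> {x\<in>U. x < xs ! j}"
      then obtain i where "i < length xs" "x = xs ! i" using xs(3) by (auto simp: in_set_conv_nth)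
      with x less_iff show "x \<in> (!) xs ` {..<j}" by auto
    qed
  qed
  moreover have "inj_on ((!) xs) {..<j}"
    using assms(2) xs(2,4) by (intro inj_on_nth) auto
  ultimately show ?thesis unfolding gap_index_def xs_def[symmetric] by (simp add: card_image)
qed

lemma nth_sorted_list_of_set_mem: "finite U \<Longrightarrow> j < card U \<Longrightarrow> sorted_list_of_set U ! j \<in> U"
  using nth_mem[of j "sorted_list_of_set U"] by simp

lemma nth_sorted_list_of_set_less_iff:
  assumes "finite U" "y \<notin> U" "j < card U"
  shows "sorted_list_of_set U ! j < y \<longleftrightarrow> j < gap_index U y"
proof -
  let ?x = "sorted_list_of_set U ! j"
  have x: "?x \<in> U" "gap_index U ?x = j"
    using assms nth_sorted_list_of_set_mem gap_index_nth_sorted_list_of_set by auto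
  show ?thesis
  proof
    assume "?x < y"
    then show "j < gap_index U y" using gap_index_strict_mono[OF assms(1) x(1)] x(2) by simp
  next
    assume j: "j < gap_index U y"
    show "?x < y"
    proof (rule ccontr)
      assume "\<not> ?x < y"
      then have "gap_index U y \<le> gap_index U ?x" by (intro gap_index_mono[OF assms(1)]) simp
      with x(2) j show False by simp
    qed
  qed
qed

lemma gap_eq_gap_block:
  assumes "finite (\<Union>L)" "i \<le> card (\<Union>L)"
  shows "gap P L i = gap_block P (\<Union>L) i"
proof -
  define U where "U = \<Union>L"
  define xs where "xs = sorted_list_of_set U"
  have len: "length xs = card U" unfolding xs_def by simp
  have "(i = 0 \<or> xs ! (i - 1) < y) \<longleftrightarrow> i \<le> gap_index U y" if "y \<notin> U" for y
    using nth_sorted_list_of_set_less_iff[of U y "i - 1"] assms that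
    unfolding U_def xs_def by (cases i) auto
  moreover have "(i = card U \<or> y < xs ! i) \<longleftrightarrow> gap_index U y \<le> i" if "y \<notin> U" for y
  proof (cases "i = card U")
    case False
    then have "i < card U" using assms U_def by simp
    moreover have "xs ! i \<noteq> y"
      using nth_sorted_list_of_set_mem \<open>i < card U\<close> assms(1) that unfolding U_def xs_def by blast
    ultimately show ?thesis
      using nth_sorted_list_of_set_less_iff[of U y i] assms that False
      unfolding U_def xs_def by auto
  qed (use gap_index_le_card assms in \<open>auto simp: U_def\<close>)
  ultimately show ?thesis
    unfolding gap_def gap_block_def Let_def U_def[symmetric] xs_def[symmetric] len
    by (intro Collect_cong) (auto intro: le_antisym)
qed

lemma in_gap_indices_iff: "c \<in> set (gap_indices P U) \<longleftrightarrow> c \<le> card U \<and> gap_block P U c \<noteq> {}"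
  by (auto simp: gap_indices_def simp del: upt_Suc)

lemma distinct_gap_indices: "distinct (gap_indices P U)"
  by (simp add: gap_indices_def)

lemma gap_block_subset: "gap_block P U c \<subseteq> \<Union>P - U"
  by (auto simp: gap_block_def)

lemma gap_blocks_disjoint: "c \<noteq> d \<Longrightarrow> gap_block P U c \<inter> gap_block P U d = {}"
  by (auto simp: gap_block_def)

lemma Union_gap_blocks:
  assumes "finite U"
  shows "(\<Union>c\<in>set (gap_indices P U). gap_block P U c) = \<Union>P - U"
proof
  show "\<Union>P - U \<subseteq> (\<Union>c\<in>set (gap_indices P U). gap_block P U c)"
  proof
    fix y assume "y \<in> \<Union>P - U"
    then have "y \<in> gap_block P U (gap_index U y)" by (auto simp: gap_block_def)
    then show "y \<in> (\<Union>c\<in>set (gap_indices P U). gap_block P U c)"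
      using gap_index_le_card[OF assms] in_gap_indices_iff by blast
  qed
qed (use gap_block_subset in blast)

lemma uword_eq:
  assumes "finite (\<Union>L)"
  shows "uword P L = map (\<lambda>c. induced P (gap_block P (\<Union>L) c)) (gap_indices P (\<Union>L))"
proof -
  have compr: "[f i. i \<leftarrow> xs, p i] = map f (filter p xs)" for f p and xs :: "nat list"
    by (induction xs) auto
  have "filter (\<lambda>i. gap P L i \<noteq> {}) [0..<card (\<Union>L) + 1] = gap_indices P (\<Union>L)"
    unfolding gap_indices_def using gap_eq_gap_block[OF assms] by (intro filter_cong) auto
  moreover have "i \<in> set (gap_indices P (\<Union>L)) \<Longrightarrow> gap P L i = gap_block P (\<Union>L) i" for i
    using gap_eq_gap_block[OF assms] in_gap_indices_iff by blast
  ultimately show ?thesis unfolding uword_def compr by simp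
qed

section \<open>Nilpotency of infinitesimal characters\<close>

definition word_size :: "ncpart list \<Rightarrow> nat" where
  "word_size w = (\<Sum>P\<leftarrow>w. card (\<Union>P))"

lemma word_size_simps [simp]:
  "word_size [] = 0" "word_size (P # w) = card (\<Union>P) + word_size w"
  "word_size (u @ v) = word_size u + word_size v"
  by (simp_all add: word_size_def)

lemma word_size_uword:
  assumes P: "nonempty_ncp P" and L: "L \<in> cuts P"
  shows "word_size (uword P L) = card (\<Union>P - \<Union>L)"
proof -
  define U where "U = \<Union>L"
  have "U \<subseteq> \<Union>P" using cuts_subset[OF L] unfolding U_def by blast
  then have fin: "finite U" "finite (gap_block P U c)" for c
    using finite_block_nonempty_ncp[OF P] gap_block_subset[of P U c] by blast+
  have "word_size (uword P L) = (\<Sum>c\<leftarrow>gap_indices P U. card (\<Union>(induced P (gap_block P U c))))"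
    unfolding uword_eq[OF fin(1)[unfolded U_def]] U_def word_size_def by (simp add: comp_def)
  also have "\<dots> = (\<Sum>c\<leftarrow>gap_indices P U. card (gap_block P U c))"
    using card_Union_induced[OF P] gap_block_subset by (intro arg_cong[where f = sum_list] map_cong) blast+
  also have "\<dots> = (\<Sum>c\<in>set (gap_indices P U). card (gap_block P U c))"
    by (rule sum_list_distinct_conv_sum_set[OF distinct_gap_indices])
  also have "\<dots> = card (\<Union>c\<in>set (gap_indices P U). gap_block P U c)"
    using fin gap_blocks_disjoint by (intro card_UN_disjoint[symmetric]) auto
  finally show ?thesis using Union_gap_blocks[OF fin(1)] unfolding U_def by simp
qed

lemma word_size_uword_less:
  assumes "nonempty_ncp P" "L \<in> cuts P" "L \<noteq> {}"
  shows "word_size (uword P L) < card (\<Union>P)"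
  unfolding word_size_uword[OF assms(1,2)] using assms cuts_subset[OF assms(2)]
  by (intro psubset_card_mono nonempty_ncpD(3)) (auto dest: Union_cut_nonempty)

lemma word_size_listset_coarsenings:
  "Qs \<in> listset (map coarsenings w) \<Longrightarrow> word_size Qs = word_size w"
  by (induction w arbitrary: Qs) (auto simp: set_Cons_def coarsenings_def partition_on_def)

text \<open>Nonempty cuts strictly decrease the size of the right factor, and on the empty cut
  \<open>f\<close> vanishes; hence \<open>f \<star> g\<close> only depends on the values of \<open>g\<close> on smaller words.\<close>

lemma conv_eq_0_if_small:
  assumes f: "is_inf_character f"
  shows "valid_word w \<Longrightarrow> (\<And>v. valid_word v \<Longrightarrow> word_size v < word_size w \<Longrightarrow> g v = 0) \<Longrightarrow> conv f g w = 0"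
proof (induction w arbitrary: g)
  case (Cons P w)
  then have P: "nonempty_ncp P" and w: "valid_word w" by auto
  have "f (lword P L) * g (uword P L @ w) = 0" if L: "L \<in> cuts P" for L
  proof (cases "L = {}")
    case False
    then show ?thesis
      using Cons.prems(2)[of "uword P L @ w"] valid_word_uword[OF P] w word_size_uword_less[OF P L]
      by simp
  qed (use f in \<open>simp add: is_inf_character_def\<close>)
  moreover have "conv f (\<lambda>v. g (P # v)) w = 0"
    using Cons.IH[OF w] Cons.prems(2) P by simp
  ultimately show ?case by (simp add: conv_Cons_inf_character[OF f P w])
qed (use f in \<open>simp add: conv_Nil is_inf_character_def\<close>)

lemma conv_pow_eq_0:
  assumes "is_inf_character f" "valid_word w" "word_size w < m"
  shows "conv_pow f m w = 0"
  using assms(2,3) by (induction m arbitrary: w) (simp_all add: conv_eq_0_if_small[OF assms(1)])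

lemma exp_conv_eq_sum:
  assumes "is_inf_character f" "valid_word w" "word_size w \<le> N"
  shows "exp_conv f w = (\<Sum>m\<le>N. conv_pow f m w / fact m)"
  unfolding exp_conv_def
proof (rule sum.mono_neutral_left)
  show "{m. conv_pow f m w \<noteq> 0} \<subseteq> {..N}"
    using conv_pow_eq_0[OF assms(1,2)] assms(3) by (auto simp: not_less[symmetric])
qed auto

section \<open>Outer blocks and gaps\<close>

lemma subset_Conv: "finite \<tau> \<Longrightarrow> \<tau> \<subseteq> Conv \<tau>"
  unfolding Conv_def by auto

lemma Conv_mono:
  assumes "finite C" "y \<subseteq> C" "y \<noteq> {}"
  shows "Conv y \<subseteq> Conv C"
  using assms Min_antimono[OF assms(2,3)] Max_mono[OF assms(2,3)] unfolding Conv_def by auto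

lemma crossing_in_Conv:
  assumes "finite B1" "finite B2" "a \<in> B1" "b \<in> B1" "c \<in> B2" "d \<in> B2" "a < c" "c < b" "b < d"
  shows "c \<in> Conv B1" "b \<in> Conv B2"
  using assms Min_le[OF assms(1)] Max_ge[OF assms(1)] Min_le[OF assms(2)] Max_ge[OF assms(2)]
  unfolding Conv_def by (meson atLeastAtMost_iff less_imp_le order_trans)+

lemma gap_index_eq_Min:
  assumes "finite \<tau>" "Conv \<tau> \<inter> U = {}" "y \<in> \<tau>"
  shows "gap_index U y = gap_index U (Min \<tau>)"
proof -
  have y: "Min \<tau> \<le> y" "y \<le> Max \<tau>" using assms by auto
  have "x < y \<longleftrightarrow> x < Min \<tau>" if "x \<in> U" for x
  proof -
    have "\<not> (Min \<tau> \<le> x \<and> x \<le> Max \<tau>)" using that assms(2) unfolding Conv_def by auto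
    then show ?thesis using y by linarith
  qed
  then have "{x\<in>U. x < y} = {x\<in>U. x < Min \<tau>}" by blast
  then show ?thesis unfolding gap_index_def by simp
qed

lemma subset_gap_block_iff:
  assumes "finite U" "finite \<tau>" "\<tau> \<noteq> {}" "\<tau> \<subseteq> \<Union>P"
  shows "(\<exists>c. \<tau> \<subseteq> gap_block P U c) \<longleftrightarrow> Conv \<tau> \<inter> U = {}"
proof
  assume "\<exists>c. \<tau> \<subseteq> gap_block P U c"
  then obtain c where c: "\<tau> \<subseteq> gap_block P U c" ..
  show "Conv \<tau> \<inter> U = {}"
  proof (rule ccontr)
    assume "Conv \<tau> \<inter> U \<noteq> {}"
    then obtain x where x: "x \<in> U" "Min \<tau> \<le> x" "x \<le> Max \<tau>" unfolding Conv_def by auto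
    have "Min \<tau> \<in> gap_block P U c" "Max \<tau> \<in> gap_block P U c"
      using c Min_in[OF assms(2,3)] Max_in[OF assms(2,3)] by blast+
    then have "Min \<tau> \<notin> U" "Max \<tau> \<notin> U" "gap_index U (Min \<tau>) = c" "gap_index U (Max \<tau>) = c"
      unfolding gap_block_def by auto
    with x have "Min \<tau> \<le> x" "x < Max \<tau>" by (auto simp: le_less)
    then have "gap_index U (Min \<tau>) < gap_index U (Max \<tau>)"
      using gap_index_mono[OF assms(1)] gap_index_strict_mono[OF assms(1) x(1)] le_less_trans by blast
    with \<open>gap_index U (Min \<tau>) = c\<close> \<open>gap_index U (Max \<tau>) = c\<close> show False by simp
  qed
next
  assume "Conv \<tau> \<inter> U = {}"
  then have "\<tau> \<subseteq> gap_block P U (gap_index U (Min \<tau>))"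
    using gap_index_eq_Min[OF assms(2)] subset_Conv[OF assms(2)] assms(4) unfolding gap_block_def by blast
  then show "\<exists>c. \<tau> \<subseteq> gap_block P U c" ..
qed

lemma subset_gap_block_in_gap_indices:
  assumes "\<tau> \<subseteq> gap_block P U c" "\<tau> \<noteq> {}" "finite U"
  shows "c \<in> set (gap_indices P U)"
proof -
  obtain y where "y \<in> gap_block P U c" using assms(1,2) by blast
  then show ?thesis using gap_index_le_card[OF assms(3)] in_gap_indices_iff
    unfolding gap_block_def by blast
qed

lemma arrowI: "\<pi> \<in> P \<Longrightarrow> \<rho> \<in> P \<Longrightarrow> Conv \<pi> \<inter> \<rho> \<noteq> {} \<Longrightarrow> arrow P \<pi> \<rho>"
  unfolding arrow_def by (rule tranclp.r_into_trancl) simp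

lemma arrow_induct_target:
  assumes "arrow P \<sigma> \<pi>" "S \<pi>"
    and "\<And>y z. y \<in> P \<Longrightarrow> Conv y \<inter> z \<noteq> {} \<Longrightarrow> S z \<Longrightarrow> S y"
  shows "S \<sigma>"
  using assms(1,2) unfolding arrow_def
  by (induction rule: converse_tranclp_induct) (use assms(3) in blast)+

lemma singleton_in_cuts_iff:
  assumes "\<sigma> \<in> Q"
  shows "{\<sigma>} \<in> cuts Q \<longleftrightarrow> (\<forall>\<tau>\<in>Q. \<tau> \<noteq> \<sigma> \<longrightarrow> Conv \<tau> \<inter> \<sigma> = {})"
proof
  assume "{\<sigma>} \<in> cuts Q"
  then show "\<forall>\<tau>\<in>Q. \<tau> \<noteq> \<sigma> \<longrightarrow> Conv \<tau> \<inter> \<sigma> = {}"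
    using in_cutsD[of "{\<sigma>}" Q \<sigma>] arrowI[OF _ assms] by blast
next
  assume "\<forall>\<tau>\<in>Q. \<tau> \<noteq> \<sigma> \<longrightarrow> Conv \<tau> \<inter> \<sigma> = {}"
  then have "s = \<sigma>" if "arrow Q s \<sigma>" for s
    using arrow_induct_target[OF that, of "\<lambda>x. x = \<sigma>"] by blast
  then show "{\<sigma>} \<in> cuts Q" unfolding cuts_def lowerset_def using assms by auto
qed

lemma Conv_Int_Union_cut:
  assumes "L \<in> cuts P" "\<pi> \<in> P" "\<pi> \<notin> L"
  shows "Conv \<pi> \<inter> \<Union>L = {}"
  using assms in_cutsD[OF assms(1)] arrowI[OF assms(2)] cuts_subset by blast

text \<open>For a nonempty cut \<open>L\<close> of \<open>P\<close>, the coarsenings \<open>Q \<ge> P\<close> having \<open>U = \<Union>L\<close> as an outer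
  block correspond to the tuples of coarsenings of the gap partitions \<open>P\<^bsub>|D\<^sub>c\<^esub>\<close>: restrict \<open>Q\<close>
  to the gaps, or conversely transport the tuple back onto the gaps and add the block \<open>U\<close>.\<close>

definition gap_split :: "ncpart \<Rightarrow> nat set \<Rightarrow> ncpart \<Rightarrow> ncpart list" where
  "gap_split P U Q = map (\<lambda>c. induced Q (gap_block P U c)) (gap_indices P U)"

definition gap_join :: "ncpart \<Rightarrow> nat set \<Rightarrow> ncpart list \<Rightarrow> ncpart" where
  "gap_join P U B = insert U (\<Union>i<length B. unstd (gap_block P U (gap_indices P U ! i)) (B ! i))"

locale nonempty_cut =
  fixes P L :: ncpart
  assumes nonempty_ncp_P: "nonempty_ncp P" and cut: "L \<in> cuts P" and cut_nonempty: "L \<noteq> {}"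
begin

abbreviation U :: "nat set" where "U \<equiv> \<Union>L"
abbreviation D :: "nat \<Rightarrow> nat set" where "D c \<equiv> gap_block P U c"
abbreviation cs :: "nat list" where "cs \<equiv> gap_indices P U"

definition outer_coarsening :: "ncpart \<Rightarrow> bool" where
  "outer_coarsening Q \<longleftrightarrow> Q \<in> coarsenings P \<and> U \<in> Q \<and> {U} \<in> cuts Q"

lemma U_subset: "U \<subseteq> \<Union>P"
  using cuts_subset[OF cut] by blast

lemma finite_U: "finite U"
  using U_subset finite_block_nonempty_ncp[OF nonempty_ncp_P] by blast

lemma U_nonempty: "U \<noteq> {}"
  using Union_cut_nonempty[OF nonempty_ncp_P cut cut_nonempty] .

lemma D_subset: "D c \<subseteq> \<Union>P"
  using gap_block_subset by blast

lemma finite_D: "finite (D c)"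
  using D_subset finite_block_nonempty_ncp[OF nonempty_ncp_P] by blast

lemma D_Int_U: "D c \<inter> U = {}"
  using gap_block_subset by blast

lemma D_nth_disjoint:
  "i < length cs \<Longrightarrow> j < length cs \<Longrightarrow> i \<noteq> j \<Longrightarrow> D (cs ! i) \<inter> D (cs ! j) = {}"
  using distinct_gap_indices[of P U] by (intro gap_blocks_disjoint) (simp add: nth_eq_iff_index_eq)

lemma uword_cut: "uword P L = map (\<lambda>c. induced P (D c)) cs"
  using uword_eq[OF finite_U] .

lemma block_subset_D:
  assumes "\<tau> \<subseteq> \<Union>P" "\<tau> \<noteq> {}" "Conv \<tau> \<inter> U = {}"
  shows "\<exists>c\<in>set cs. \<tau> \<subseteq> D c"
  using assms subset_gap_block_iff[OF finite_U _ assms(2,1)] subset_gap_block_in_gap_indices[OF _ _ finite_U]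
    finite_block_nonempty_ncp[OF nonempty_ncp_P assms(1)] by blast

lemma outer_coarseningD:
  assumes "outer_coarsening Q"
  shows "partition_on (\<Union>P) Q" "noncrossing Q" "refines P Q" "U \<in> Q" "{U} \<in> cuts Q" "finite Q"
proof -
  show Q: "partition_on (\<Union>P) Q" "noncrossing Q" "refines P Q" "U \<in> Q" "{U} \<in> cuts Q"
    using assms unfolding outer_coarsening_def coarsenings_def by auto
  show "finite Q" using finite_elements[OF nonempty_ncpD(3)[OF nonempty_ncp_P] Q(1)] .
qed

lemma outer_coarsening_block_subset_D:
  assumes "outer_coarsening Q" "\<tau> \<in> Q" "\<tau> \<noteq> U"
  shows "\<exists>c\<in>set cs. \<tau> \<subseteq> D c"
proof (rule block_subset_D)
  show "\<tau> \<subseteq> \<Union>P" "\<tau> \<noteq> {}"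
    using outer_coarseningD(1)[OF assms(1)] assms(2) unfolding partition_on_def by blast+
  show "Conv \<tau> \<inter> U = {}"
    using singleton_in_cuts_iff[of U Q] outer_coarseningD(4,5)[OF assms(1)] assms(2,3) by blast
qed

lemma restr_outer_coarsening_D:
  assumes "outer_coarsening Q"
  shows "restr Q (D c) = {\<tau>\<in>Q. \<tau> \<subseteq> D c}"
proof (intro set_eqI iffI)
  fix X assume "X \<in> restr Q (D c)"
  then obtain \<tau> where \<tau>: "\<tau> \<in> Q" "X = \<tau> \<inter> D c" "X \<noteq> {}" unfolding restr_def by blast
  then have "\<tau> \<noteq> U" using D_Int_U by blast
  then obtain d where "\<tau> \<subseteq> D d" using outer_coarsening_block_subset_D[OF assms \<tau>(1)] by blast
  moreover from this have "d = c" using \<tau>(2,3) gap_blocks_disjoint by blast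
  ultimately show "X \<in> {\<tau>\<in>Q. \<tau> \<subseteq> D c}" using \<tau> by (simp add: Int_absorb2)
next
  fix X assume "X \<in> {\<tau>\<in>Q. \<tau> \<subseteq> D c}"
  moreover have "{} \<notin> Q" using outer_coarseningD(1)[OF assms] partition_onD3 by blast
  ultimately show "X \<in> restr Q (D c)" unfolding restr_def by (auto simp: Int_absorb2)
qed

lemma outer_coarsening_minus_U:
  assumes "outer_coarsening Q"
  shows "(\<Union>c\<in>set cs. {\<tau>\<in>Q. \<tau> \<subseteq> D c}) = Q - {U}"
proof
  have "\<not> U \<subseteq> D c" for c using D_Int_U U_nonempty by blast
  then show "(\<Union>c\<in>set cs. {\<tau>\<in>Q. \<tau> \<subseteq> D c}) \<subseteq> Q - {U}" by blast
  show "Q - {U} \<subseteq> (\<Union>c\<in>set cs. {\<tau>\<in>Q. \<tau> \<subseteq> D c})"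
    using outer_coarsening_block_subset_D[OF assms] by blast
qed

lemma gap_split_in_listset:
  assumes "outer_coarsening Q"
  shows "gap_split P U Q \<in> listset (map coarsenings (uword P L))"
  unfolding listset_iff_list_all2 uword_cut gap_split_def list_all2_map1 list_all2_map2
  using outer_coarseningD[OF assms] nonempty_ncpD[OF nonempty_ncp_P] finite_D D_subset
  by (intro list_all2_refl induced_in_coarsenings[where A = "\<Union>P"]) auto

lemma gap_join_gap_split:
  assumes "outer_coarsening Q"
  shows "gap_join P U (gap_split P U Q) = Q"
proof -
  have "unstd (D c) (induced Q (D c)) = {\<tau>\<in>Q. \<tau> \<subseteq> D c}" for c
    unfolding induced_def restr_outer_coarsening_D[OF assms] by (rule unstd_std[OF finite_D]) blast
  then have "(\<Union>i<length cs. unstd (D (cs ! i)) (induced Q (D (cs ! i)))) = (\<Union>c\<in>set cs. {\<tau>\<in>Q. \<tau> \<subseteq> D c})"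
    using UN_lessThan_length_nth[where f = "\<lambda>c. {\<tau>\<in>Q. \<tau> \<subseteq> D c}"] by simp
  then show ?thesis
    using outer_coarsening_minus_U[OF assms] outer_coarseningD(4)[OF assms]
    unfolding gap_join_def gap_split_def by auto
qed

lemma charB_quot_induced_D:
  assumes "outer_coarsening Q"
  shows "charB K (quot (induced P (D c)) (induced Q (D c))) = (\<Prod>\<tau>\<in>{\<tau>\<in>Q. \<tau> \<subseteq> D c}. K (induced P \<tau>))"
proof -
  have "inj_on ((`) (rank (D c))) (restr Q (D c))"
    by (rule inj_on_subset[OF inj_on_image_Pow[OF inj_on_rank[OF finite_D]]]) (auto simp: restr_def)
  then have "charB K (quot (induced P (D c)) (induced Q (D c)))
      = (\<Prod>\<tau>\<in>restr Q (D c). K (induced (induced P (D c)) (rank (D c) ` \<tau>)))"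
    unfolding charB_quot induced_def[of Q] std_def by (simp add: prod.reindex)
  also have "\<dots> = (\<Prod>\<tau>\<in>restr Q (D c). K (induced P \<tau>))"
    using induced_induced[OF finite_D] by (intro prod.cong) (auto simp: restr_def)
  finally show ?thesis using restr_outer_coarsening_D[OF assms] by simp
qed

lemma charB_quot_outer_coarsening:
  assumes "outer_coarsening Q"
  shows "charB K (quot P Q) = K (induced P U) * charB K (sum_list (map2 quot (uword P L) (gap_split P U Q)))"
proof -
  have "charB K (sum_list (map2 quot (uword P L) (gap_split P U Q)))
      = (\<Prod>c\<in>set cs. \<Prod>\<tau>\<in>{\<tau>\<in>Q. \<tau> \<subseteq> D c}. K (induced P \<tau>))"
    unfolding uword_cut gap_split_def charB_sum_list_map2_quot
      prod.distinct_set_conv_list[OF distinct_gap_indices]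
    by (simp add: charB_quot_induced_D[OF assms])
  also have "\<dots> = (\<Prod>\<tau>\<in>(\<Union>c\<in>set cs. {\<tau>\<in>Q. \<tau> \<subseteq> D c}). K (induced P \<tau>))"
  proof (rule prod.UNION_disjoint[symmetric])
    show "\<forall>c\<in>set cs. finite {\<tau>\<in>Q. \<tau> \<subseteq> D c}" using outer_coarseningD(6)[OF assms] by simp
    show "\<forall>c\<in>set cs. \<forall>d\<in>set cs. c \<noteq> d \<longrightarrow> {\<tau>\<in>Q. \<tau> \<subseteq> D c} \<inter> {\<tau>\<in>Q. \<tau> \<subseteq> D d} = {}"
    proof (intro ballI impI)
      fix c d :: nat assume "c \<noteq> d"
      have "\<tau> = {}" if "\<tau> \<subseteq> D c" "\<tau> \<subseteq> D d" for \<tau>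
        using that gap_blocks_disjoint[OF \<open>c \<noteq> d\<close>, of P U] by blast
      moreover have "{} \<notin> Q" using outer_coarseningD(1)[OF assms] partition_onD3 by blast
      ultimately show "{\<tau>\<in>Q. \<tau> \<subseteq> D c} \<inter> {\<tau>\<in>Q. \<tau> \<subseteq> D d} = {}" by blast
    qed
  qed simp
  also have "\<dots> = (\<Prod>\<tau>\<in>Q - {U}. K (induced P \<tau>))"
    unfolding outer_coarsening_minus_U[OF assms] ..
  finally show ?thesis
    using outer_coarseningD(4,6)[OF assms] by (simp add: charB_quot prod.remove)
qed

context
  fixes B :: "ncpart list"
  assumes B: "B \<in> listset (map coarsenings (uword P L))"
begin

abbreviation join_blocks :: "nat \<Rightarrow> ncpart" where
  "join_blocks i \<equiv> unstd (D (cs ! i)) (B ! i)"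

lemma length_B: "length B = length cs"
  using B unfolding listset_iff_list_all2 uword_cut by (simp add: list_all2_lengthD)

lemma nth_B: "i < length cs \<Longrightarrow> B ! i \<in> coarsenings (induced P (D (cs ! i)))"
  using B unfolding listset_iff_list_all2 uword_cut by (auto simp: list_all2_conv_all_nth)

lemma gap_join_eq: "gap_join P U B = insert U (\<Union>i<length cs. join_blocks i)"
  unfolding gap_join_def length_B ..

lemma
  assumes "i < length cs"
  shows partition_on_join_blocks: "partition_on (D (cs ! i)) (join_blocks i)"
    and noncrossing_join_blocks: "noncrossing (join_blocks i)"
    and std_join_blocks: "std (D (cs ! i)) (join_blocks i) = B ! i"
proof -
  have "ncp (card (D (cs ! i))) (induced P (D (cs ! i)))"
    using ncp_induced_nonempty_ncp[OF nonempty_ncp_P D_subset] .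
  then have B_i: "partition_on {1..card (D (cs ! i))} (B ! i)" "noncrossing (B ! i)"
    using nth_B[OF assms] ncp_Union unfolding coarsenings_def by auto
  show "partition_on (D (cs ! i)) (join_blocks i)" "noncrossing (join_blocks i)"
    using partition_on_unstd[OF finite_D B_i(1)] noncrossing_unstd[OF finite_D B_i] .
  show "std (D (cs ! i)) (join_blocks i) = B ! i"
    using std_unstd[OF finite_D] partition_onD1[OF B_i(1)] by simp
qed

lemma join_blockD:
  assumes "i < length cs" "\<tau> \<in> join_blocks i"
  shows "\<tau> \<subseteq> D (cs ! i)" "\<tau> \<noteq> {}" "finite \<tau>" "Conv \<tau> \<inter> U = {}"
proof -
  note part = partition_on_join_blocks[OF assms(1)]
  show sub: "\<tau> \<subseteq> D (cs ! i)" using Union_upper[OF assms(2)] partition_onD1[OF part] by simp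
  show ne: "\<tau> \<noteq> {}" using partition_onD3[OF part] assms(2) by auto
  show fin: "finite \<tau>" using finite_subset[OF sub finite_D] .
  show "Conv \<tau> \<inter> U = {}" using subset_gap_block_iff[OF finite_U fin ne] sub D_subset by blast
qed

lemma gap_join_blocks_in_D:
  assumes "i < length cs"
  shows "{\<tau>\<in>gap_join P U B. \<tau> \<subseteq> D (cs ! i)} = join_blocks i"
proof (intro set_eqI iffI)
  fix \<tau> assume \<tau>: "\<tau> \<in> {\<tau>\<in>gap_join P U B. \<tau> \<subseteq> D (cs ! i)}"
  then have "\<tau> \<noteq> U" using D_Int_U U_nonempty by blast
  then obtain j where j: "j < length cs" "\<tau> \<in> join_blocks j" using \<tau> unfolding gap_join_eq by blast
  have "i = j"
    using D_nth_disjoint[OF assms j(1)] \<tau> join_blockD(1,2)[OF j] by auto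
  then show "\<tau> \<in> join_blocks i" using j by simp
next
  fix \<tau> assume "\<tau> \<in> join_blocks i"
  then show "\<tau> \<in> {\<tau>\<in>gap_join P U B. \<tau> \<subseteq> D (cs ! i)}"
    using assms join_blockD(1)[OF assms] unfolding gap_join_eq by blast
qed

lemma Union_gap_join: "\<Union>(gap_join P U B) = \<Union>P"
proof -
  have "\<Union>(join_blocks i) = D (cs ! i)" if "i < length cs" for i
    using partition_onD1[OF partition_on_join_blocks[OF that]] by simp
  then have "(\<Union>i<length cs. \<Union>(join_blocks i)) = (\<Union>i<length cs. D (cs ! i))" by simp
  also have "\<dots> = \<Union>P - U"
    using UN_lessThan_length_nth[where f = D] Union_gap_blocks[OF finite_U] by simp
  finally have blocks: "(\<Union>i<length cs. \<Union>(join_blocks i)) = \<Union>P - U" .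
  have "\<Union>(gap_join P U B) = U \<union> (\<Union>i<length cs. \<Union>(join_blocks i))"
    unfolding gap_join_eq by blast
  then show ?thesis unfolding blocks using U_subset by blast
qed

lemma partition_on_gap_join: "partition_on (\<Union>P) (gap_join P U B)"
proof (rule partition_onI)
  show "\<Union>(gap_join P U B) = \<Union>P" by (rule Union_gap_join)
  have "{} \<notin> join_blocks i" if "i < length cs" for i using join_blockD(2)[OF that] by blast
  then show "{} \<notin> gap_join P U B" using U_nonempty unfolding gap_join_eq by blast
  fix p q assume pq: "p \<in> gap_join P U B" "q \<in> gap_join P U B" "p \<noteq> q"
  have disjnt_U: "disjnt \<tau> U" if "i < length cs" "\<tau> \<in> join_blocks i" for i \<tau>
    using join_blockD(1)[OF that] D_Int_U[of "cs ! i"] unfolding disjnt_def by blast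
  consider "p = U" "q \<noteq> U" | "q = U" "p \<noteq> U" | i j where "i < length cs" "j < length cs"
      "p \<in> join_blocks i" "q \<in> join_blocks j"
    using pq unfolding gap_join_eq by blast
  then show "disjnt p q"
  proof cases
    case 1
    then obtain j where "j < length cs" "q \<in> join_blocks j" using pq(2) unfolding gap_join_eq by blast
    then show ?thesis using disjnt_sym[OF disjnt_U] 1(1) by blast
  next
    case 2
    then obtain i where "i < length cs" "p \<in> join_blocks i" using pq(1) unfolding gap_join_eq by blast
    then show ?thesis using disjnt_U 2(1) by blast
  next
    case (3 i j)
    show ?thesis
    proof (cases "i = j")
      case True
      then show ?thesis
        using pairwiseD[OF partition_onD2[OF partition_on_join_blocks[OF 3(1)]]] 3 pq(3) by blast
    next
      case False
      then show ?thesis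
        using D_nth_disjoint[OF 3(1,2) False] join_blockD(1)[OF 3(1,3)] join_blockD(1)[OF 3(2,4)]
        unfolding disjnt_def by blast
    qed
  qed
qed

lemma noncrossing_gap_join: "noncrossing (gap_join P U B)"
proof (rule noncrossingI)
  fix B1 B2 a b c d
  assume B12: "B1 \<in> gap_join P U B" "B2 \<in> gap_join P U B" "B1 \<noteq> B2"
    and x: "a \<in> B1" "b \<in> B1" "c \<in> B2" "d \<in> B2" "a < c" "c < b" "b < d"
  consider "B1 = U" "B2 \<noteq> U" | "B2 = U" "B1 \<noteq> U" | "B1 \<noteq> U" "B2 \<noteq> U"
    using B12(3) by blast
  then show False
  proof cases
    case 1
    obtain j where j: "j < length cs" "B2 \<in> join_blocks j"
      using B12(2) 1(2) unfolding gap_join_eq by blast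
    have "b \<in> Conv B2" using crossing_in_Conv(2)[OF finite_U join_blockD(3)[OF j] x[unfolded 1]] .
    then show False using join_blockD(4)[OF j] x(2) 1(1) by blast
  next
    case 2
    obtain i where i: "i < length cs" "B1 \<in> join_blocks i"
      using B12(1) 2(2) unfolding gap_join_eq by blast
    have "c \<in> Conv B1" using crossing_in_Conv(1)[OF join_blockD(3)[OF i] finite_U x[unfolded 2]] .
    then show False using join_blockD(4)[OF i] x(3) 2(1) by blast
  next
    case 3
    obtain i j where ij: "i < length cs" "B1 \<in> join_blocks i" "j < length cs" "B2 \<in> join_blocks j"
      using B12(1,2) 3 unfolding gap_join_eq by blast
    have "gap_index U a = cs ! i" "gap_index U b = cs ! i" "gap_index U c = cs ! j"
      using join_blockD(1)[OF ij(1,2)] join_blockD(1)[OF ij(3,4)] x(1-3) unfolding gap_block_def by auto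
    moreover have "gap_index U a \<le> gap_index U c" "gap_index U c \<le> gap_index U b"
      using gap_index_mono[OF finite_U] x(5,6) by auto
    ultimately have "i = j"
      using distinct_gap_indices ij(1,3) by (simp add: nth_eq_iff_index_eq)
    then show False
      using noncrossingD[OF noncrossing_join_blocks[OF ij(1)] ij(2) _ B12(3) x] ij(4) by simp
  qed
qed

lemma refines_gap_join: "refines P (gap_join P U B)"
  unfolding refines_def
proof
  fix \<pi> assume \<pi>: "\<pi> \<in> P"
  show "\<exists>C\<in>gap_join P U B. \<pi> \<subseteq> C"
  proof (cases "\<pi> \<in> L")
    case False
    have "\<pi> \<subseteq> \<Union>P" "\<pi> \<noteq> {}" using \<pi> empty_notin_nonempty_ncp[OF nonempty_ncp_P] by blast+
    then obtain i where i: "i < length cs" "\<pi> \<subseteq> D (cs ! i)"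
      using block_subset_D Conv_Int_Union_cut[OF cut \<pi> False] by (metis in_set_conv_nth)
    have "rank (D (cs ! i)) ` \<pi> \<in> induced P (D (cs ! i))"
      using \<pi> i(2) \<open>\<pi> \<noteq> {}\<close> unfolding in_induced_iff by (metis Int_absorb2)
    then obtain b where b: "b \<in> B ! i" "rank (D (cs ! i)) ` \<pi> \<subseteq> b"
      by (rule refinesE[OF coarseningsD(3)[OF nth_B[OF i(1)]]])
    then have "\<pi> \<subseteq> inv_into (D (cs ! i)) (rank (D (cs ! i))) ` b"
      using inv_into_image_cancel[OF inj_on_rank[OF finite_D] i(2)] by blast
    moreover have "inv_into (D (cs ! i)) (rank (D (cs ! i))) ` b \<in> gap_join P U B"
      unfolding gap_join_eq unstd_def using i(1) b(1) by blast
    ultimately show ?thesis by blast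
  qed (auto simp: gap_join_def)
qed

lemma outer_coarsening_gap_join: "outer_coarsening (gap_join P U B)"
proof -
  have "{U} \<in> cuts (gap_join P U B)"
    using singleton_in_cuts_iff[of U "gap_join P U B"] join_blockD(4) unfolding gap_join_eq by blast
  then show ?thesis
    using partition_on_gap_join noncrossing_gap_join refines_gap_join
    unfolding outer_coarsening_def coarsenings_def gap_join_def by simp
qed

lemma gap_split_gap_join: "gap_split P U (gap_join P U B) = B"
proof (rule nth_equalityI)
  show "length (gap_split P U (gap_join P U B)) = length B" by (simp add: gap_split_def length_B)
  fix i assume "i < length (gap_split P U (gap_join P U B))"
  then have i: "i < length cs" by (simp add: gap_split_def)
  have "restr (gap_join P U B) (D (cs ! i)) = join_blocks i"
    using restr_outer_coarsening_D[OF outer_coarsening_gap_join] gap_join_blocks_in_D[OF i] by simp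
  then show "gap_split P U (gap_join P U B) ! i = B ! i"
    using i std_join_blocks[OF i] by (simp add: gap_split_def induced_def)
qed

end

lemma sum_outer_coarsenings:
  "(\<Sum>Q | outer_coarsening Q. charB K (quot P Q) * g (gap_split P U Q)) = K (induced P U) * act g K (uword P L)"
proof -
  have "(\<Sum>Q | outer_coarsening Q. charB K (quot P Q) * g (gap_split P U Q))
      = (\<Sum>B\<in>listset (map coarsenings (uword P L)). K (induced P U) * (g B * charB K (sum_list (map2 quot (uword P L) B))))"
    by (rule sum.reindex_bij_witness[where i = "gap_join P U" and j = "gap_split P U"])
      (auto simp: gap_join_gap_split gap_split_in_listset gap_split_gap_join outer_coarsening_gap_join
        charB_quot_outer_coarsening)
  then show ?thesis unfolding act_def by (simp add: sum_distrib_left)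
qed

end

lemma nonempty_cutI: "nonempty_ncp P \<Longrightarrow> L \<in> cuts P - {{}} \<Longrightarrow> nonempty_cut P L"
  by (simp add: nonempty_cut_def)

lemma cut_below_outer_block:
  assumes P: "nonempty_ncp P" and Q: "Q \<in> coarsenings P" and \<sigma>: "\<sigma> \<in> Q" "{\<sigma>} \<in> cuts Q"
  shows "{\<pi>\<in>P. \<pi> \<subseteq> \<sigma>} \<in> cuts P" "\<Union>{\<pi>\<in>P. \<pi> \<subseteq> \<sigma>} = \<sigma>"
proof -
  note pQ = coarseningsD(1)[OF Q] and rQ = coarseningsD(3)[OF Q]
  have below: "\<pi> \<subseteq> \<sigma>" if \<pi>: "\<pi> \<in> P" "Conv \<pi> \<inter> \<sigma> \<noteq> {}" for \<pi>
  proof -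
    obtain C where C: "C \<in> Q" "\<pi> \<subseteq> C" using rQ \<pi>(1) by (rule refinesE)
    have "C \<subseteq> \<Union>P" using Union_upper[OF C(1)] partition_onD1[OF pQ] by simp
    then have "finite C" by (rule finite_block_nonempty_ncp[OF P])
    moreover have "\<pi> \<noteq> {}" using empty_notin_nonempty_ncp[OF P] \<pi>(1) by blast
    ultimately have "Conv \<pi> \<subseteq> Conv C" using C(2) Conv_mono by blast
    then have "Conv C \<inter> \<sigma> \<noteq> {}" using \<pi>(2) by blast
    moreover have "\<forall>\<tau>\<in>Q. \<tau> \<noteq> \<sigma> \<longrightarrow> Conv \<tau> \<inter> \<sigma> = {}" using singleton_in_cuts_iff[OF \<sigma>(1)] \<sigma>(2) by simp
    ultimately have "C = \<sigma>" using C(1) by blast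
    then show ?thesis using C(2) by simp
  qed
  show "{\<pi>\<in>P. \<pi> \<subseteq> \<sigma>} \<in> cuts P"
    unfolding cuts_def lowerset_def
    using arrow_induct_target[where S = "\<lambda>\<pi>. \<pi> \<in> P \<and> \<pi> \<subseteq> \<sigma>"] below by blast
  show "\<Union>{\<pi>\<in>P. \<pi> \<subseteq> \<sigma>} = \<sigma>"
  proof
    show "\<sigma> \<subseteq> \<Union>{\<pi>\<in>P. \<pi> \<subseteq> \<sigma>}"
    proof
      fix y assume y: "y \<in> \<sigma>"
      then obtain \<pi> where \<pi>: "\<pi> \<in> P" "y \<in> \<pi>" using pQ \<sigma>(1) unfolding partition_on_def by blast
      then obtain C where "C \<in> Q" "\<pi> \<subseteq> C" using rQ by (elim refinesE)
      then have "C = \<sigma>" using partition_onD2[OF pQ] \<sigma>(1) y \<pi>(2) by (metis disjnt_iff pairwiseD subsetD)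
      then show "y \<in> \<Union>{\<pi>\<in>P. \<pi> \<subseteq> \<sigma>}" using \<pi> \<open>\<pi> \<subseteq> C\<close> by blast
    qed
  qed blast
qed

lemma blocks_below_Union_cut:
  assumes "nonempty_ncp P" "L \<in> cuts P"
  shows "{\<pi>\<in>P. \<pi> \<subseteq> \<Union>L} = L"
proof (intro set_eqI iffI)
  fix \<pi> assume "\<pi> \<in> {\<pi>\<in>P. \<pi> \<subseteq> \<Union>L}"
  then have \<pi>: "\<pi> \<in> P" "\<pi> \<subseteq> \<Union>L" "\<pi> \<noteq> {}" using empty_notin_nonempty_ncp[OF assms(1)] by auto
  then obtain y \<rho> where "y \<in> \<pi>" "\<rho> \<in> L" "y \<in> \<rho>" by blast
  moreover have "disjoint P" using partition_onD2[OF nonempty_ncpD(1)[OF assms(1)]] .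
  ultimately have "\<pi> = \<rho>" using \<pi>(1) cuts_subset[OF assms(2)] by (metis disjnt_iff pairwiseD subsetD)
  then show "\<pi> \<in> L" using \<open>\<rho> \<in> L\<close> by simp
qed (use cuts_subset[OF assms(2)] in blast)

lemma sum_outer_blocks_eq_sum_cuts:
  assumes P: "nonempty_ncp P"
  shows "(\<Sum>Q\<in>coarsenings P. \<Sum>\<sigma> | \<sigma> \<in> Q \<and> {\<sigma>} \<in> cuts Q. F Q \<sigma>)
    = (\<Sum>L\<in>cuts P - {{}}. \<Sum>Q | nonempty_cut.outer_coarsening P L Q. F Q (\<Union>L))"
proof -
  have fin_Q: "finite Q" if "Q \<in> coarsenings P" for Q
    using finite_nonempty_ncp[OF coarsenings_nonempty_ncp[OF P that]] .
  have fin_outer: "finite {Q. nonempty_cut.outer_coarsening P L Q}" if "L \<in> cuts P - {{}}" for L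
    using finite_coarsenings[OF P] nonempty_cut.outer_coarsening_def[OF nonempty_cutI[OF P that]]
    by (simp add: finite_subset[of _ "coarsenings P"] subset_iff)
  have "(\<Sum>Q\<in>coarsenings P. \<Sum>\<sigma> | \<sigma> \<in> Q \<and> {\<sigma>} \<in> cuts Q. F Q \<sigma>)
      = (\<Sum>(Q, \<sigma>)\<in>Sigma (coarsenings P) (\<lambda>Q. {\<sigma>. \<sigma> \<in> Q \<and> {\<sigma>} \<in> cuts Q}). F Q \<sigma>)"
    using finite_coarsenings[OF P] fin_Q by (subst sum.Sigma) auto
  also have "\<dots> = (\<Sum>(L, Q)\<in>Sigma (cuts P - {{}}) (\<lambda>L. {Q. nonempty_cut.outer_coarsening P L Q}). F Q (\<Union>L))"
  proof (rule sum.reindex_bij_witness[where j = "\<lambda>(Q, \<sigma>). ({\<pi>\<in>P. \<pi> \<subseteq> \<sigma>}, Q)"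
        and i = "\<lambda>(L, Q). (Q, \<Union>L)"])
    fix a assume "a \<in> Sigma (coarsenings P) (\<lambda>Q. {\<sigma>. \<sigma> \<in> Q \<and> {\<sigma>} \<in> cuts Q})"
    then obtain Q \<sigma> where a: "a = (Q, \<sigma>)" "Q \<in> coarsenings P" "\<sigma> \<in> Q" "{\<sigma>} \<in> cuts Q" by blast
    note cut = cut_below_outer_block[OF P a(2-4)]
    have "\<sigma> \<noteq> {}" using a(2,3) unfolding coarsenings_def partition_on_def by blast
    then have L: "{\<pi>\<in>P. \<pi> \<subseteq> \<sigma>} \<in> cuts P - {{}}" using cut by auto
    show "(\<lambda>(L, Q). (Q, \<Union>L)) ((\<lambda>(Q, \<sigma>). ({\<pi>\<in>P. \<pi> \<subseteq> \<sigma>}, Q)) a) = a"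
      "(\<lambda>(L, Q). F Q (\<Union>L)) ((\<lambda>(Q, \<sigma>). ({\<pi>\<in>P. \<pi> \<subseteq> \<sigma>}, Q)) a) = (\<lambda>(Q, \<sigma>). F Q \<sigma>) a"
      using a(1) cut(2) by simp_all
    show "(\<lambda>(Q, \<sigma>). ({\<pi>\<in>P. \<pi> \<subseteq> \<sigma>}, Q)) a \<in> Sigma (cuts P - {{}}) (\<lambda>L. {Q. nonempty_cut.outer_coarsening P L Q})"
      using a L cut(2) nonempty_cut.outer_coarsening_def[OF nonempty_cutI[OF P L]] by simp
  next
    fix b assume "b \<in> Sigma (cuts P - {{}}) (\<lambda>L. {Q. nonempty_cut.outer_coarsening P L Q})"
    then obtain L Q where b: "b = (L, Q)" "L \<in> cuts P - {{}}" "nonempty_cut.outer_coarsening P L Q" by blast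
    then show "(\<lambda>(Q, \<sigma>). ({\<pi>\<in>P. \<pi> \<subseteq> \<sigma>}, Q)) ((\<lambda>(L, Q). (Q, \<Union>L)) b) = b"
      "(\<lambda>(L, Q). (Q, \<Union>L)) b \<in> Sigma (coarsenings P) (\<lambda>Q. {\<sigma>. \<sigma> \<in> Q \<and> {\<sigma>} \<in> cuts Q})"
      using blocks_below_Union_cut[OF P] nonempty_cut.outer_coarsening_def[OF nonempty_cutI[OF P b(2)]]
      by auto
  qed
  also have "\<dots> = (\<Sum>L\<in>cuts P - {{}}. \<Sum>Q | nonempty_cut.outer_coarsening P L Q. F Q (\<Union>L))"
    using finite_cuts[OF finite_nonempty_ncp[OF P]] fin_outer by (subst sum.Sigma) auto
  finally show ?thesis .
qed

section \<open>The identity \<open>(e \<star> g) \<curvearrowleft> K = \<kappa> \<star> (g \<curvearrowleft> K)\<close>\<close>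

lemma restr_Union_subset:
  assumes "partition_on A Q" "L \<subseteq> Q"
  shows "restr Q (\<Union>L) = L"
proof (intro set_eqI iffI)
  fix X assume "X \<in> restr Q (\<Union>L)"
  then obtain B where B: "B \<in> Q" "X = B \<inter> \<Union>L" "X \<noteq> {}" unfolding restr_def by blast
  then obtain C where C: "C \<in> L" "B \<inter> C \<noteq> {}" by blast
  then have "B = C" using partition_onD2[OF assms(1)] B(1) assms(2) by (metis disjnt_def pairwiseD subsetD)
  then show "X \<in> L" using B(2) C(1) by (simp add: Int_absorb2 Sup_upper)
next
  fix X assume "X \<in> L"
  moreover have "X \<noteq> {}" using calculation assms partition_onD3 by blast
  ultimately show "X \<in> restr Q (\<Union>L)" using assms(2) unfolding restr_def by blast
qed

lemma card_induced_Union_cut: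
  assumes "nonempty_ncp Q" "L \<in> cuts Q"
  shows "card (induced Q (\<Union>L)) = card L"
proof -
  have "\<Union>L \<subseteq> \<Union>Q" using cuts_subset[OF assms(2)] by blast
  then have "finite (\<Union>L)" by (rule finite_block_nonempty_ncp[OF assms(1)])
  then have "inj_on ((`) (rank (\<Union>L))) L"
    by (rule inj_on_subset[OF inj_on_image_Pow[OF inj_on_rank]]) blast
  then show ?thesis
    unfolding induced_def std_def restr_Union_subset[OF nonempty_ncpD(1)[OF assms(1)] cuts_subset[OF assms(2)]]
    by (simp add: card_image)
qed

lemma sum_cuts_e_char:
  assumes "nonempty_ncp Q"
  shows "(\<Sum>L\<in>cuts Q. e_char (lword Q L) * g (uword Q L)) = (\<Sum>\<sigma> | \<sigma> \<in> Q \<and> {\<sigma>} \<in> cuts Q. g (uword Q {\<sigma>}))"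
proof -
  let ?I = "(\<lambda>\<sigma>. {\<sigma>}) ` {\<sigma>. \<sigma> \<in> Q \<and> {\<sigma>} \<in> cuts Q}"
  have e: "e_char (lword Q L) = (if L \<in> ?I then 1 else 0)" if L: "L \<in> cuts Q" for L
    using card_induced_Union_cut[OF assms L] cuts_subset[OF L] L
    by (cases "L = {}") (auto simp: e_char_def lword_nonempty card_1_singleton_iff)
  then have "(\<Sum>L\<in>cuts Q. e_char (lword Q L) * g (uword Q L)) = (\<Sum>L\<in>cuts Q. if L \<in> ?I then g (uword Q L) else 0)"
    by (intro sum.cong) (simp_all add: e)
  also have "\<dots> = (\<Sum>L\<in>cuts Q \<inter> ?I. g (uword Q L))"
    using finite_cuts[OF finite_nonempty_ncp[OF assms]] by (rule sum.inter_restrict[symmetric])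
  also have "cuts Q \<inter> ?I = ?I" by blast
  finally show ?thesis by (simp add: sum.reindex)
qed

lemma uword_singleton:
  assumes "Q \<in> coarsenings P" "finite \<sigma>"
  shows "uword Q {\<sigma>} = gap_split P \<sigma> Q"
proof -
  have "\<Union>Q = \<Union>P" using partition_onD1[OF coarseningsD(1)[OF assms(1)]] by simp
  then have "gap_block Q \<sigma> = gap_block P \<sigma>" by (simp add: gap_block_def fun_eq_iff)
  then show ?thesis
    using uword_eq[of "{\<sigma>}" Q] assms(2) by (simp add: gap_split_def gap_indices_def)
qed

lemma sum_cuts_e_char_coarsening:
  assumes P: "nonempty_ncp P" and Q: "Q \<in> coarsenings P"
  shows "(\<Sum>L\<in>cuts Q. e_char (lword Q L) * g (uword Q L)) = (\<Sum>\<sigma> | \<sigma> \<in> Q \<and> {\<sigma>} \<in> cuts Q. g (gap_split P \<sigma> Q))"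
proof -
  have "finite \<sigma>" if "\<sigma> \<in> Q" for \<sigma>
  proof -
    have "\<sigma> \<subseteq> \<Union>P" using Union_upper[OF that] partition_onD1[OF coarseningsD(1)[OF Q]] by simp
    then show ?thesis by (rule finite_block_nonempty_ncp[OF P])
  qed
  then show ?thesis
    unfolding sum_cuts_e_char[OF coarsenings_nonempty_ncp[OF P Q]]
    using uword_singleton[OF Q] by (intro sum.cong) auto
qed

lemma is_inf_character_e_char: "is_inf_character e_char"
  unfolding is_inf_character_def
proof (intro conjI allI impI)
  fix u v :: "ncpart list" assume "valid_word u \<and> valid_word v \<and> u \<noteq> [] \<and> v \<noteq> []"
  then obtain a u' b v' where "u = a # u'" "v = b # v'" by (meson neq_Nil_conv)
  then show "e_char (u @ v) = 0" by (simp add: e_char_def split: list.split)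
qed (simp add: e_char_def)

context
  fixes \<kappa> :: "ncpart list \<Rightarrow> 'a :: field_char_0" and K :: "ncpart \<Rightarrow> 'a"
  assumes \<kappa>: "is_inf_character \<kappa>" and K: "\<forall>P. nonempty_ncp P \<longrightarrow> K P = \<kappa> [P]"
begin

lemma sum_coarsenings_cuts_e_char:
  assumes P: "nonempty_ncp P"
  shows "(\<Sum>Q\<in>coarsenings P. charB K (quot P Q) * (\<Sum>L\<in>cuts Q. e_char (lword Q L) * g (uword Q L)))
       = (\<Sum>L\<in>cuts P. \<kappa> (lword P L) * act g K (uword P L))"
proof -
  have "(\<Sum>Q\<in>coarsenings P. charB K (quot P Q) * (\<Sum>L\<in>cuts Q. e_char (lword Q L) * g (uword Q L)))
      = (\<Sum>Q\<in>coarsenings P. \<Sum>\<sigma> | \<sigma> \<in> Q \<and> {\<sigma>} \<in> cuts Q. charB K (quot P Q) * g (gap_split P \<sigma> Q))"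
    by (simp add: sum_distrib_left sum_cuts_e_char_coarsening[OF P])
  also have "\<dots> = (\<Sum>L\<in>cuts P - {{}}. \<Sum>Q | nonempty_cut.outer_coarsening P L Q.
      charB K (quot P Q) * g (gap_split P (\<Union>L) Q))"
    by (rule sum_outer_blocks_eq_sum_cuts[OF P])
  also have "\<dots> = (\<Sum>L\<in>cuts P - {{}}. K (induced P (\<Union>L)) * act g K (uword P L))"
    using nonempty_cut.sum_outer_coarsenings[OF nonempty_cutI[OF P]] by (intro sum.cong) auto
  also have "\<dots> = (\<Sum>L\<in>cuts P - {{}}. \<kappa> (lword P L) * act g K (uword P L))"
  proof (intro sum.cong refl)
    fix L assume L: "L \<in> cuts P - {{}}"
    then have "nonempty_ncp (induced P (\<Union>L))" using valid_word_lword[OF P, of L] by (simp add: lword_nonempty)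
    then show "K (induced P (\<Union>L)) * act g K (uword P L) = \<kappa> (lword P L) * act g K (uword P L)"
      using K L by (simp add: lword_nonempty)
  qed
  also have "\<dots> = (\<Sum>L\<in>cuts P. \<kappa> (lword P L) * act g K (uword P L))"
    using \<kappa> finite_cuts[OF finite_nonempty_ncp[OF P]] empty_in_cuts
    by (simp add: sum.remove[of _ "{}"] is_inf_character_def)
  finally show ?thesis .
qed

lemma act_conv_e_char:
  "valid_word w \<Longrightarrow> act (conv e_char g) K w = conv \<kappa> (act g K) w"
proof (induction w arbitrary: g)
  case Nil
  then show ?case using \<kappa> by (simp add: act_Nil conv_Nil e_char_def is_inf_character_def)
next
  case (Cons P w)
  then have P: "nonempty_ncp P" and w: "valid_word w" by auto
  define g' where "g' = (\<lambda>x. act (\<lambda>y. g (x @ y)) K w)"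
  have "act (\<lambda>v. conv e_char g (Q # v)) K w =
      (\<Sum>L\<in>cuts Q. e_char (lword Q L) * g' (uword Q L)) + conv \<kappa> (act (\<lambda>v. g (Q # v)) K) w"
    if Q: "Q \<in> coarsenings P" for Q
  proof -
    have "act (\<lambda>v. conv e_char g (Q # v)) K w
        = act (\<lambda>v. (\<Sum>L\<in>cuts Q. e_char (lword Q L) * g (uword Q L @ v)) + conv e_char (\<lambda>v'. g (Q # v')) v) K w"
      by (rule act_cong) (simp add: valid_word_listset_coarsenings[OF w]
          conv_Cons_inf_character[OF is_inf_character_e_char coarsenings_nonempty_ncp[OF P Q]])
    then show ?thesis
      unfolding g'_def Cons.IH[OF w, symmetric] by (simp add: act_add act_sum act_scale)
  qed
  then have "act (conv e_char g) K (P # w)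
      = (\<Sum>Q\<in>coarsenings P. charB K (quot P Q) * (\<Sum>L\<in>cuts Q. e_char (lword Q L) * g' (uword Q L)))
        + (\<Sum>Q\<in>coarsenings P. charB K (quot P Q) * conv \<kappa> (act (\<lambda>v. g (Q # v)) K) w)"
    unfolding act_Cons by (simp add: distrib_left sum.distrib)
  also have "\<dots> = (\<Sum>L\<in>cuts P. \<kappa> (lword P L) * act g K (uword P L @ w)) + conv \<kappa> (\<lambda>v. act g K (P # v)) w"
    unfolding sum_coarsenings_cuts_e_char[OF P] unfolding g'_def
    by (simp add: act_append act_Cons conv_sum_right conv_scale_right)
  also have "\<dots> = conv \<kappa> (act g K) (P # w)"
    by (rule conv_Cons_inf_character[OF \<kappa> P w, symmetric])
  finally show ?case .
qed

lemma act_conv_pow_e_char: "valid_word w \<Longrightarrow> act (conv_pow e_char m) K w = conv_pow \<kappa> m w"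
proof (induction m arbitrary: w)
  case (Suc m)
  have "act (conv_pow e_char (Suc m)) K w = conv \<kappa> (act (conv_pow e_char m) K) w"
    using act_conv_e_char[OF Suc.prems] by simp
  also have "\<dots> = conv \<kappa> (conv_pow \<kappa> m) w"
    by (rule conv_cong) (auto intro!: Suc.IH valid_word_uwords[OF Suc.prems])
  finally show ?case by simp
qed (simp add: act_counit)

lemma act_exp_conv_e_char:
  assumes w: "valid_word w"
  shows "act (exp_conv e_char) K w = exp_conv \<kappa> w"
proof -
  have "act (exp_conv e_char) K w = act (\<lambda>Qs. \<Sum>m\<le>word_size w. conv_pow e_char m Qs / fact m) K w"
  proof (rule act_cong)
    fix Qs assume Qs: "Qs \<in> listset (map coarsenings w)"
    show "exp_conv e_char Qs = (\<Sum>m\<le>word_size w. conv_pow e_char m Qs / fact m)"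
      using exp_conv_eq_sum[OF is_inf_character_e_char valid_word_listset_coarsenings[OF w Qs],
          of "word_size w"] word_size_listset_coarsenings[OF Qs] by simp
  qed
  also have "\<dots> = (\<Sum>m\<le>word_size w. conv_pow \<kappa> m w / fact m)"
    by (simp add: act_sum act_divide act_conv_pow_e_char[OF w])
  also have "\<dots> = exp_conv \<kappa> w"
    using exp_conv_eq_sum[OF \<kappa> w order_refl] by simp
  finally show ?thesis .
qed

end

theorem mainTheorem15:
  fixes \<kappa> \<phi> :: "ncpart list \<Rightarrow> 'a::field_char_0" and K :: "ncpart \<Rightarrow> 'a"
  assumes "is_inf_character \<kappa>"
    and "\<forall>P. nonempty_ncp P \<longrightarrow> K P = \<kappa> [P]"
    and "is_character \<phi>"
  shows "(\<forall>w. valid_word w \<longrightarrow> \<phi> w = exp_conv \<kappa> w) \<longleftrightarrow>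
         (\<forall>w. valid_word w \<longrightarrow> \<phi> w = act (exp_conv e_char) K w)"
  using act_exp_conv_e_char[OF assms(1,2)] by auto

end
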